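(* Let $1<q<p<N$, $N\ge2$, $p^\ast=Np/(N-p)$, and $N(p-1)/(N-p)<s<p^\ast$. Let $(\varepsilon_j)$, $(\delta_j)$ be sequences with $\varepsilon_j\to0$, $0<\delta_j\le1$, $\varepsilon_j/\delta_j\to0$. Then $$\frac{\int_{\mathbb{R}^N}|\nabla v_{\varepsilon_j,\delta_j}|^q\,dx}{\int_{\mathbb{R}^N}v_{\varepsilon_j,\delta_j}^s\,dx}=\begin{cases}\Theta\big(\varepsilon_j^{[(N-p)s-Nq]/p}\big),& q>\frac{N(p-1)}{N-1},\\ \Theta\big(\varepsilon_j^{[(N-p)s-Nq]/p}\,|\log(\varepsilon_j/\delta_j)|\big),& q=\frac{N(p-1)}{N-1},\\ \Theta\big(\varepsilon_j^{[(N-p)(s+q/(p-1))-Np]/p}\,\delta_j^{[N(p-1)-(N-1)q]/(p-1)}\big),& q<\frac{N(p-1)}{N-1},\end{cases}$$ and $$\frac{(\varepsilon_j/\delta_j)^{(N-p)/(p-1)}}{\int_{\mathbb{R}^N}v_{\varepsilon_j,\delta_j}^s\,dx}=\Theta\big(\varepsilon_j^{[(N-p)(p-1)s-(Np-2N+p)p]/(p(p-1))}\,\delta_j^{-(N-p)/(p-1)}\big).$$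
   Context: Fix $\rho>0$ and $\psi\in C^\infty_0(B_\rho(0))$ with $0\le\psi\le1$, $\psi=1$ on $B_{\rho/2}(0)$. For $\varepsilon>0$, $0<\delta\le1$, $u_{\varepsilon,\delta}(x)=\psi(x/\delta)\big(\varepsilon^{p/(p-1)}+|x|^{p/(p-1)}\big)^{-(N-p)/p}$ and $v_{\varepsilon,\delta}=u_{\varepsilon,\delta}/\|u_{\varepsilon,\delta}\|_{L^{p^\ast}(\mathbb{R}^N)}$. Notation: $A_j=\Theta(B_j)$ means there are constants $c,C>0$ with $c|B_j|\le|A_j|\le C|B_j|$ for all sufficiently large $j$. *)

theory Defs
  imports "HOL-Analysis.Analysis"
begin

fun dpart :: "'a::euclidean_space list \<Rightarrow> ('a \<Rightarrow> real) \<Rightarrow> ('a \<Rightarrow> real)" where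
  "dpart [] f = f"
| "dpart (d # ds) f = (\<lambda>x. frechet_derivative (dpart ds f) (at x) d)"

definition smooth_fun :: "('a::euclidean_space \<Rightarrow> real) \<Rightarrow> bool" where
  "smooth_fun f \<longleftrightarrow> (\<forall>ds. set ds \<subseteq> Basis \<longrightarrow> dpart ds f differentiable_on UNIV)"

definition grad :: "('a::euclidean_space \<Rightarrow> real) \<Rightarrow> 'a \<Rightarrow> 'a" where
  "grad f x = (\<Sum>i\<in>Basis. frechet_derivative f (at x) i *\<^sub>R i)"

definition u_fun :: "real \<Rightarrow> real \<Rightarrow> ('a::euclidean_space \<Rightarrow> real) \<Rightarrow> real \<Rightarrow> real \<Rightarrow> 'a \<Rightarrow> real" where
  "u_fun N p \<psi> \<epsilon> \<delta> x =
     \<psi> ((1 / \<delta>) *\<^sub>R x) * (\<epsilon> powr (p/(p-1)) + norm x powr (p/(p-1))) powr (-(N-p)/p)"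

definition Lnorm :: "real \<Rightarrow> ('a::euclidean_space \<Rightarrow> real) \<Rightarrow> real" where
  "Lnorm r f = (integral\<^sup>L lborel (\<lambda>x. \<bar>f x\<bar> powr r)) powr (1/r)"

definition v_fun :: "real \<Rightarrow> real \<Rightarrow> ('a::euclidean_space \<Rightarrow> real) \<Rightarrow> real \<Rightarrow> real \<Rightarrow> 'a \<Rightarrow> real" where
  "v_fun N p \<psi> \<epsilon> \<delta> x = u_fun N p \<psi> \<epsilon> \<delta> x / Lnorm (N*p/(N-p)) (u_fun N p \<psi> \<epsilon> \<delta>)"

definition Theta_seq :: "(nat \<Rightarrow> real) \<Rightarrow> (nat \<Rightarrow> real) \<Rightarrow> bool" where
  "Theta_seq A B \<longleftrightarrow> (\<exists>c C. c > 0 \<and> C > 0 \<and>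
      (\<forall>\<^sub>F j in sequentially. c * \<bar>B j\<bar> \<le> \<bar>A j\<bar> \<and> \<bar>A j\<bar> \<le> C * \<bar>B j\<bar>))"

end

(*
  u is the Aubin-Talenti bubble U(x) = (eps^a + |x|^a)^(-b), a = p/(p-1), b = (N-p)/p, cut off
  at radius delta*rho; U is comparable to eps^(-gamma) on |x| < eps and to |x|^(-gamma) outside,
  gamma = (N-p)/(p-1). Every moment is estimated by comparing the integrand with its values on
  the dyadic shells eps*2^k <= |x| < eps*2^(k+1), k < K, where 2^K is about delta*rho/eps.
  For t*gamma > N this gives int u^t = Theta(eps^(N - gamma*t)). For the gradient the shells give
  eps^theta * sum_{k<K} 2^(k*theta) with theta = N - q*(gamma+1), and the cut-off annulus adds
  delta^theta. The geometric sum is bounded, equal to K = Theta(log(delta/eps)), or of order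
  (delta/eps)^theta according as q is above, at or below N(p-1)/(N-1). Normalising by the
  L^{p*} norm, itself Theta(eps^(-(N-p)/(p(p-1)))), yields the stated exponents.
*)

theory Submission
  imports Defs "HOL-Library.Landau_Symbols"
begin

lemma Theta_seq_iff_bigtheta: "Theta_seq A B \<longleftrightarrow> A \<in> \<Theta>(B)"
proof
  assume "Theta_seq A B"
  then obtain c C where "0 < c" "0 < C"
    "\<forall>\<^sub>F j in sequentially. c * \<bar>B j\<bar> \<le> \<bar>A j\<bar> \<and> \<bar>A j\<bar> \<le> C * \<bar>B j\<bar>"
    unfolding Theta_seq_def by blast
  then show "A \<in> \<Theta>(B)" by (intro bigthetaI') (simp_all only: real_norm_def)
next
  assume "A \<in> \<Theta>(B)"
  then obtain c C where "0 < c" "0 < C"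
    "\<forall>\<^sub>F j in sequentially. \<bar>A j\<bar> \<le> C * \<bar>B j\<bar>" "\<forall>\<^sub>F j in sequentially. c * \<bar>B j\<bar> \<le> \<bar>A j\<bar>"
    unfolding bigtheta_def by (elim landau_o.bigE landau_omega.bigE IntE) (simp only: real_norm_def)
  then show "Theta_seq A B" unfolding Theta_seq_def using eventually_conj by blast
qed

lemma bigthetaI_nonneg_bounds:
  fixes f g :: "'a \<Rightarrow> real"
  assumes "0 < c" "0 < C" "\<forall>\<^sub>F x in F. 0 \<le> g x \<and> c * g x \<le> f x \<and> f x \<le> C * g x"
  shows "f \<in> \<Theta>[F](g)"
  using assms(3)
proof (intro bigthetaI'[OF assms(1,2)], eventually_elim)
  case (elim x)
  then have "0 \<le> f x" using assms(1) by (smt (verit) mult_nonneg_nonneg)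
  then show ?case using elim by simp
qed

lemma bigthetaI_affine_bounds:
  fixes f y :: "'a \<Rightarrow> real"
  assumes "filterlim y at_top F" "0 < \<alpha>" "0 < \<alpha>'"
    and "\<forall>\<^sub>F x in F. \<alpha> * y x + \<beta> \<le> f x \<and> f x \<le> \<alpha>' * y x + \<beta>'"
  shows "f \<in> \<Theta>[F](y)"
proof (rule bigthetaI_nonneg_bounds[of "\<alpha> / 2" "2 * \<alpha>'"])
  have "\<forall>\<^sub>F x in F. max (max 0 (-2 * \<beta> / \<alpha>)) (\<beta>' / \<alpha>') \<le> y x"
    using assms(1) unfolding filterlim_at_top by blast
  then show "\<forall>\<^sub>F x in F. 0 \<le> y x \<and> \<alpha> / 2 * y x \<le> f x \<and> f x \<le> 2 * \<alpha>' * y x"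
    using assms(4)
  proof eventually_elim
    case (elim x)
    then have "0 \<le> y x" "-2 * \<beta> / \<alpha> \<le> y x" "\<beta>' / \<alpha>' \<le> y x" by auto
    then have "0 \<le> y x" "-2 * \<beta> \<le> \<alpha> * y x" "\<beta>' \<le> \<alpha>' * y x"
      using assms(2,3) by (auto simp: field_simps)
    then show ?case using elim by auto
  qed
qed (use assms in auto)

lemma power2_bracket:
  fixes y :: real
  assumes "1 \<le> y" "y < 2^K"
  shows "\<exists>k<K. 2^k \<le> y \<and> y < 2^(k+1)"
  using assms
proof (induction K)
  case (Suc K)
  then show ?case by (cases "y < 2^K") (auto simp: less_Suc_eq)
qed simp

lemma exists_dyadic_cover:
  fixes e R :: real
  assumes "0 < e" "e \<le> R"
  obtains K where "R \<le> e * 2^K" "e * 2^K \<le> 2 * R"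
proof -
  obtain K where "R / e < 2^K" using real_arch_pow[of 2 "R / e"] by auto
  moreover have "1 \<le> R / e" using assms by simp
  ultimately obtain k where "2^k \<le> R / e" "R / e < 2^(k+1)" using power2_bracket by blast
  then show thesis using that[of "k+1"] assms(1) by (simp add: field_simps)
qed

lemma exists_dyadic_fill:
  fixes e R :: real
  assumes "0 < e" "4 * e \<le> R"
  obtains L where "1 \<le> L" "e * 2^L \<le> R / 2" "R < e * 2^(L+2)"
proof -
  obtain K where "R / (2 * e) < 2^K" using real_arch_pow[of 2 "R / (2 * e)"] by auto
  moreover have "2 \<le> R / (2 * e)" using assms by (simp add: field_simps)
  ultimately obtain k where k: "2^k \<le> R / (2 * e)" "R / (2 * e) < 2^(k+1)"
    using power2_bracket[of "R / (2 * e)" K] by auto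
  moreover have "k \<noteq> 0" using k \<open>2 \<le> R / (2 * e)\<close> by (intro notI) simp
  ultimately show thesis using that[of k] assms(1) by (simp add: field_simps)
qed

lemma ln_ratio_ge_dyadic:
  fixes e R :: real
  assumes "0 < e" "e * 2^K \<le> 2 * R"
  shows "real K * ln 2 \<le> ln 2 + ln (R / e)"
proof -
  have "0 < e * 2^K" using assms(1) by simp
  then have "0 < R" using assms(2) by linarith
  have "real K * ln 2 = ln (2 ^ K)" by (rule ln_realpow[symmetric])
  also have "\<dots> \<le> ln (2 * (R / e))" using assms by (intro ln_mono) (auto simp: field_simps)
  also have "\<dots> = ln 2 + ln (R / e)" using assms(1) \<open>0 < R\<close> ln_mult[of 2 "R / e"] by simp
  finally show ?thesis .
qed

lemma ln_ratio_less_dyadic: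
  fixes e R :: real
  assumes "0 < e" "0 < R" "R < e * 2^(L+2)"
  shows "ln (R / e) < real L * ln 2 + 2 * ln 2"
proof -
  have "ln (R / e) < ln (2 ^ (L + 2))" using assms by (subst ln_less_cancel_iff) (auto simp: field_simps)
  also have "\<dots> = real (L + 2) * ln 2" by (rule ln_realpow)
  finally show ?thesis by (simp add: algebra_simps)
qed

lemma power_two_powr: "(2 powr \<theta>) ^ K = ((2::real) ^ K) powr \<theta>"
  by (simp add: powr_power powr_powr powr_realpow[symmetric] mult.commute)

lemma geometric_sum_le_of_lt_1:
  fixes x :: real
  assumes "0 \<le> x" "x < 1"
  shows "(\<Sum>k<K. x^k) \<le> 1 / (1 - x)"
proof -
  have "(\<Sum>k<K. x^k) = (1 - x^K) / (1 - x)" using assms by (simp add: sum_gp_strict)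
  also have "\<dots> \<le> 1 / (1 - x)" using assms by (intro divide_right_mono) auto
  finally show ?thesis .
qed

lemma geometric_sum_le_of_gt_1:
  fixes x :: real
  assumes "1 < x"
  shows "(\<Sum>k<K. x^k) \<le> x^K / (x - 1)"
proof -
  have "(\<Sum>k<K. x^k) = (x^K - 1) / (x - 1)" using assms sum_gp_strict[of x K] by (simp add: field_simps)
  also have "\<dots> \<le> x^K / (x - 1)" using assms by (intro divide_right_mono) auto
  finally show ?thesis .
qed

lemma power_le_geometric_sum:
  fixes x :: real
  assumes "0 \<le> x" "1 \<le> K"
  shows "x^(K-1) \<le> (\<Sum>k<K. x^k)"
  using assms by (intro member_le_sum) auto

lemma dyadic_geometric_sum_le:
  fixes e R \<theta> :: real
  assumes "0 < \<theta>" "0 < e" "e * 2^K \<le> 2 * R"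
  shows "e powr \<theta> * (\<Sum>k<K. (2 powr \<theta>)^k) \<le> (2 * R) powr \<theta> / (2 powr \<theta> - 1)"
proof -
  have x0: "1 < 2 powr \<theta>" using assms(1) by simp
  have "e powr \<theta> * (\<Sum>k<K. (2 powr \<theta>)^k) \<le> e powr \<theta> * ((2 ^ K) powr \<theta> / (2 powr \<theta> - 1))"
    using geometric_sum_le_of_gt_1[OF x0, of K] by (intro mult_left_mono) (auto simp: power_two_powr)
  also have "\<dots> = (e * 2 ^ K) powr \<theta> / (2 powr \<theta> - 1)" by (simp add: powr_mult)
  also have "\<dots> \<le> (2 * R) powr \<theta> / (2 powr \<theta> - 1)"
    using assms less_imp_le[OF x0] by (intro divide_right_mono powr_mono2) auto
  finally show ?thesis .
qed

lemma dyadic_geometric_sum_ge: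
  fixes e R \<theta> :: real
  assumes "0 < \<theta>" "0 < e" "0 < R" "1 \<le> L" "R < e * 2^(L+2)"
  shows "(R / 8) powr \<theta> \<le> e powr \<theta> * (\<Sum>k<L. (2 powr \<theta>)^k)"
proof -
  have "(2::real)^(L+2) = 8 * 2^(L-1)" using assms(4) by (cases L) auto
  then have "R / 8 \<le> e * 2^(L-1)" using assms(5) by simp
  then have "(R / 8) powr \<theta> \<le> e powr \<theta> * (2 powr \<theta>)^(L-1)"
    unfolding power_two_powr powr_mult[symmetric] using assms by (intro powr_mono2) auto
  also have "\<dots> \<le> e powr \<theta> * (\<Sum>k<L. (2 powr \<theta>)^k)"
    using assms(4) by (intro mult_left_mono power_le_geometric_sum) auto
  finally show ?thesis .
qed

lemma one_add_mult_le_mult: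
  fixes A S :: real
  assumes "0 \<le> S" "1 \<le> A"
  shows "1 + (A - 1) * S \<le> A * (1 + S)"
proof -
  have "A * (1 + S) - (1 + (A - 1) * S) = (A - 1) + S" by (simp add: algebra_simps)
  then show ?thesis using assms by linarith
qed

lemma powr_add_le:
  fixes X Y :: real
  assumes "0 \<le> X" "0 \<le> Y" "0 < q"
  shows "(X + Y) powr q \<le> 2 powr q * (X powr q + Y powr q)"
proof -
  have "(X + Y) powr q \<le> (2 * max X Y) powr q" using assms by (intro powr_mono2) auto
  also have "\<dots> = 2 powr q * max X Y powr q" using assms by (simp add: powr_mult)
  also have "max X Y powr q \<le> X powr q + Y powr q" using assms by (auto simp: max_def)
  finally show ?thesis by (simp add: mult_left_mono)
qed

lemma mult_powr_divide_powr:
  fixes x y :: real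
  assumes "0 < x"
  shows "y * x powr a / x powr c = x powr (a - c) * y"
  using assms by (simp add: powr_diff)

lemma divide_powr_divide_powr:
  fixes x y :: real
  assumes "0 < x" "0 < y"
  shows "(x / y) powr a / x powr c = x powr (a - c) * y powr -a"
  using assms by (simp add: powr_divide powr_diff powr_minus field_simps)

lemma sobolev_exponents:
  fixes N p :: real
  assumes "1 < p" "p < N"
  shows "(N - p) / (p - 1) * (N * p / (N - p)) = N * p / (p - 1)"
    "(N - N * p / (p - 1)) / (N * p / (N - p)) = -((N - p) / (p * (p - 1)))"
    "(N - p) / (p - 1) - (N - p) / (p * (p - 1)) = (N - p) / p"
    "(N - p) / (p - 1) + 1 = (N - 1) / (p - 1)"
proof -
  define k D where "k = p - 1" and "D = N - p"
  have nz: "k \<noteq> 0" "D \<noteq> 0" "p \<noteq> 0" "N \<noteq> 0" using assms unfolding k_def D_def by auto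
  show "(N - p) / (p - 1) * (N * p / (N - p)) = N * p / (p - 1)"
    "(N - N * p / (p - 1)) / (N * p / (N - p)) = -((N - p) / (p * (p - 1)))"
    "(N - p) / (p - 1) - (N - p) / (p * (p - 1)) = (N - p) / p"
    "(N - p) / (p - 1) + 1 = (N - 1) / (p - 1)"
    unfolding k_def[symmetric] D_def[symmetric] using nz
    by (simp_all add: field_simps) (simp_all add: k_def D_def algebra_simps)
qed

section \<open>Integrals over dyadic shells\<close>

definition annulus :: "real \<Rightarrow> real \<Rightarrow> 'a::real_normed_vector set" where
  "annulus r R = {x. r \<le> norm x \<and> norm x < R}"

lemma annulus_eq: "annulus r R = ball 0 R - ball 0 r"
  by (auto simp: annulus_def)

lemma annulus_in_borel [measurable]: "annulus r R \<in> sets borel"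
  unfolding annulus_eq by simp

lemma ball_in_borel [measurable]: "ball (0::'a::real_normed_vector) r \<in> sets borel"
  by simp

lemma measure_annulus:
  assumes "0 \<le> r" "r \<le> R"
  shows "measure lborel (annulus r R :: 'a::euclidean_space set)
    = unit_ball_vol DIM('a) * (R ^ DIM('a) - r ^ DIM('a))"
proof -
  have "measure lborel (annulus r R :: 'a set)
      = measure lborel (ball (0::'a) R) - measure lborel (ball (0::'a) r)"
    unfolding annulus_eq using assms emeasure_bounded_finite[of "ball (0::'a) R"] by (intro measure_Diff) auto
  then show ?thesis using assms by (simp add: content_ball algebra_simps)
qed

lemma integrable_indicator_annulus:
  "integrable lborel (indicat_real (annulus r R :: 'a::euclidean_space set))"
proof -
  have "emeasure lborel (ball (0::'a) R - ball 0 r) < \<infinity>"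
    by (intro emeasure_bounded_finite) auto
  then show ?thesis by (simp add: integrable_indicator_iff annulus_eq)
qed

lemma integrable_indicator_ball:
  "integrable lborel (indicat_real (ball (0::'a::euclidean_space) r))"
  using emeasure_bounded_finite[of "ball (0::'a) r"] by (simp add: integrable_indicator_iff)

definition dyadic_shell :: "real \<Rightarrow> nat \<Rightarrow> 'a::real_normed_vector set" where
  "dyadic_shell r k = annulus (r * 2^k) (r * 2^(k+1))"

lemma dyadic_shell_unique:
  assumes "0 < r" "x \<in> dyadic_shell r j" "x \<in> dyadic_shell r k"
  shows "j = k"
proof -
  have "r * 2^j < r * 2^(k+1)" "r * 2^k < r * 2^(j+1)"
    using assms(2,3) by (auto simp: dyadic_shell_def annulus_def simp del: power_Suc)
  then have "j < k + 1" "k < j + 1" using assms(1) by (auto simp del: power_Suc)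
  then show ?thesis by linarith
qed

lemma dyadic_shell_cover:
  assumes "0 < r" "r \<le> norm x" "norm x < r * 2^K"
  obtains k where "k < K" "x \<in> dyadic_shell r k"
proof -
  have "1 \<le> norm x / r" "norm x / r < 2^K" using assms by (auto simp: field_simps)
  from power2_bracket[OF this] obtain k where "k < K" "2^k \<le> norm x / r" "norm x / r < 2^(k+1)"
    by blast
  with assms(1) show thesis
    using that[of k] by (simp add: dyadic_shell_def annulus_def field_simps del: power_Suc)
qed

lemma measure_dyadic_shell:
  assumes "0 < r"
  shows "measure lborel (dyadic_shell r k :: 'a::euclidean_space set)
    = unit_ball_vol DIM('a) * (2^DIM('a) - 1) * r powr DIM('a) * (2 powr DIM('a))^k"
proof -
  have "measure lborel (dyadic_shell r k :: 'a set)
      = unit_ball_vol DIM('a) * ((r * 2^(k+1)) ^ DIM('a) - (r * 2^k) ^ DIM('a))"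
    unfolding dyadic_shell_def using assms by (intro measure_annulus) auto
  also have "(r * 2^(k+1)) ^ DIM('a) - (r * 2^k) ^ DIM('a) = (2^DIM('a) - 1) * r ^ DIM('a) * (2^DIM('a))^k"
  proof -
    have "((2::real)^k)^DIM('a) = (2^DIM('a))^k" by (metis power_mult mult.commute)
    then show ?thesis by (simp add: power_mult_distrib power_add algebra_simps)
  qed
  finally show ?thesis using assms by (simp add: powr_realpow)
qed

definition dyadic_step :: "real \<Rightarrow> real \<Rightarrow> nat \<Rightarrow> 'a::real_normed_vector \<Rightarrow> real" where
  "dyadic_step r \<kappa> K x = (\<Sum>k<K. (r * 2^k) powr -\<kappa> * indicator (dyadic_shell r k) x)"

lemma dyadic_step_nonneg: "0 \<le> dyadic_step r \<kappa> K x"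
  unfolding dyadic_step_def by (intro sum_nonneg) auto

lemma dyadic_step_shell:
  assumes "0 < r" "x \<in> dyadic_shell r j" "j < K"
  shows "dyadic_step r \<kappa> K x = (r * 2^j) powr -\<kappa>"
proof -
  have "(r * 2^k) powr -\<kappa> * indicator (dyadic_shell r k) x = (if k = j then (r * 2^j) powr -\<kappa> else 0)" for k
    using dyadic_shell_unique[OF assms(1,2), of k] assms(2) by (cases "k = j") (auto simp: indicator_def)
  then have "dyadic_step r \<kappa> K x = (\<Sum>k<K. if k = j then (r * 2^j) powr -\<kappa> else 0)"
    unfolding dyadic_step_def by (intro sum.cong) auto
  then show ?thesis using assms(3) by simp
qed

lemma dyadic_step_outside:
  assumes "\<And>k. k < K \<Longrightarrow> x \<notin> dyadic_shell r k"
  shows "dyadic_step r \<kappa> K x = 0"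
  unfolding dyadic_step_def using assms by (intro sum.neutral) auto

lemma norm_powr_le_dyadic_step:
  assumes "0 < r" "0 \<le> \<kappa>" "r \<le> norm x" "norm x < r * 2^K"
  shows "norm x powr -\<kappa> \<le> dyadic_step r \<kappa> K x"
proof -
  obtain j where j: "j < K" "x \<in> dyadic_shell r j" using dyadic_shell_cover[OF assms(1,3,4)] .
  then have "r * 2^j \<le> norm x" by (simp add: dyadic_shell_def annulus_def)
  moreover have "0 < r * 2^j" using assms(1) by simp
  ultimately have "norm x powr -\<kappa> \<le> (r * 2^j) powr -\<kappa>" using assms(2) by (intro powr_mono2') simp_all
  then show ?thesis using dyadic_step_shell[OF assms(1) j(2,1)] by simp
qed

lemma dyadic_step_le_norm_powr:
  assumes "0 < r" "0 \<le> \<kappa>"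
  shows "2 powr -\<kappa> * dyadic_step r \<kappa> K x \<le> norm x powr -\<kappa>"
proof (cases "\<exists>j<K. x \<in> dyadic_shell r j")
  case True
  then obtain j where j: "j < K" "x \<in> dyadic_shell r j" by blast
  then have x: "r * 2^j \<le> norm x" "norm x < r * 2^(j+1)" by (auto simp: dyadic_shell_def annulus_def)
  have "2 powr -\<kappa> * (r * 2^j) powr -\<kappa> = (r * 2^(j+1)) powr -\<kappa>"
    using assms(1) by (simp add: powr_mult mult_ac)
  also have "\<dots> \<le> norm x powr -\<kappa>"
  proof (rule powr_mono2')
    have "0 < r * 2^j" using assms(1) by simp
    then show "0 < norm x" using x(1) by linarith
  qed (use x assms in auto)
  finally show ?thesis using dyadic_step_shell[OF assms(1) j(2,1)] by simp
next
  case False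
  then show ?thesis using dyadic_step_outside[of K x r \<kappa>] by auto
qed

lemma integrable_dyadic_step: "integrable lborel (dyadic_step r \<kappa> K :: 'a::euclidean_space \<Rightarrow> real)"
  unfolding dyadic_step_def[abs_def] dyadic_shell_def
  by (intro Bochner_Integration.integrable_sum integrable_mult_right integrable_indicator_annulus)

lemma integral_dyadic_step:
  assumes "0 < r"
  shows "integral\<^sup>L lborel (dyadic_step r \<kappa> K :: 'a::euclidean_space \<Rightarrow> real)
    = unit_ball_vol DIM('a) * (2^DIM('a) - 1) * r powr (real DIM('a) - \<kappa>) * (\<Sum>k<K. (2 powr (real DIM('a) - \<kappa>))^k)"
proof -
  have "integral\<^sup>L lborel (dyadic_step r \<kappa> K :: 'a \<Rightarrow> real)
      = (\<Sum>k<K. (r * 2^k) powr -\<kappa> * measure lborel (dyadic_shell r k :: 'a set))"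
    unfolding dyadic_step_def[abs_def] dyadic_shell_def
    by (subst Bochner_Integration.integral_sum) (auto intro!: integrable_mult_right integrable_indicator_annulus)
  also have "\<dots> = (\<Sum>k<K. unit_ball_vol DIM('a) * (2^DIM('a) - 1) * r powr (real DIM('a) - \<kappa>) * (2 powr (real DIM('a) - \<kappa>))^k)"
  proof (intro sum.cong refl)
    fix k
    have "(r * 2^k) powr -\<kappa> = r powr -\<kappa> * 2 powr (real k * -\<kappa>)"
      by (simp add: powr_mult powr_powr flip: powr_realpow)
    moreover have "(2 powr c) ^ k = 2 powr (real k * c)" for c :: real by (simp add: powr_power)
    ultimately have "(r * 2^k) powr -\<kappa> * (r powr DIM('a) * (2 powr DIM('a))^k)
        = (r powr -\<kappa> * r powr DIM('a)) * (2 powr (real k * -\<kappa>) * 2 powr (real k * DIM('a)))"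
      by (simp only: mult_ac)
    also have "\<dots> = r powr (real DIM('a) - \<kappa>) * (2 powr (real DIM('a) - \<kappa>))^k"
      by (simp add: powr_power flip: powr_add) (simp add: algebra_simps)
    finally have e: "(r * 2^k) powr -\<kappa> * (r powr DIM('a) * (2 powr DIM('a))^k)
        = r powr (real DIM('a) - \<kappa>) * (2 powr (real DIM('a) - \<kappa>))^k" .
    have "(r * 2^k) powr -\<kappa> * measure lborel (dyadic_shell r k :: 'a set)
        = unit_ball_vol DIM('a) * (2^DIM('a) - 1) * ((r * 2^k) powr -\<kappa> * (r powr DIM('a) * (2 powr DIM('a))^k))"
      unfolding measure_dyadic_shell[OF assms] by (simp only: mult_ac)
    then show "(r * 2^k) powr -\<kappa> * measure lborel (dyadic_shell r k :: 'a set)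
        = unit_ball_vol DIM('a) * (2^DIM('a) - 1) * r powr (real DIM('a) - \<kappa>) * (2 powr (real DIM('a) - \<kappa>))^k"
      unfolding e by (simp only: mult_ac)
  qed
  finally show ?thesis by (simp add: sum_distrib_left)
qed

lemma integrable_nonneg_bounded:
  fixes f g :: "'a \<Rightarrow> real"
  assumes "integrable M g" "f \<in> borel_measurable M" "\<And>x. 0 \<le> f x" "\<And>x. f x \<le> g x"
  shows "integrable M f"
  by (rule Bochner_Integration.integrable_bound[OF assms(1,2)])
     (use assms(3,4) in \<open>auto intro!: AE_I2 simp: order_trans[OF _ assms(4)]\<close>)

lemma integral_le_on_ball:
  fixes f :: "'a::euclidean_space \<Rightarrow> real"
  assumes "f \<in> borel_measurable lborel" "\<And>x. 0 \<le> f x" "0 \<le> r"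
    and "\<And>x. norm x < r \<Longrightarrow> f x \<le> c" "\<And>x. r \<le> norm x \<Longrightarrow> f x = 0"
  shows "integrable lborel f" "integral\<^sup>L lborel f \<le> c * unit_ball_vol DIM('a) * r ^ DIM('a)"
proof -
  have bound: "f x \<le> c * indicator (ball 0 r) x" for x
    using assms(4,5)[of x] by (cases "norm x < r") auto
  have int: "integrable lborel (\<lambda>x::'a. c * indicator (ball 0 r) x)"
    by (intro integrable_mult_right integrable_indicator_ball)
  show "integrable lborel f" by (rule integrable_nonneg_bounded[OF int assms(1,2) bound])
  then have "integral\<^sup>L lborel f \<le> integral\<^sup>L lborel (\<lambda>x::'a. c * indicator (ball 0 r) x)"
    by (intro integral_mono int bound)
  then show "integral\<^sup>L lborel f \<le> c * unit_ball_vol DIM('a) * r ^ DIM('a)"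
    using assms(3) by (simp add: content_ball)
qed

lemma integral_ge_on_ball:
  fixes f :: "'a::euclidean_space \<Rightarrow> real"
  assumes "integrable lborel f" "\<And>x. 0 \<le> f x" "0 \<le> r" "\<And>x. norm x < r \<Longrightarrow> c \<le> f x"
  shows "c * unit_ball_vol DIM('a) * r ^ DIM('a) \<le> integral\<^sup>L lborel f"
proof -
  have "c * indicator (ball 0 r) x \<le> f x" for x
    using assms(2,4)[of x] by (cases "norm x < r") auto
  then have "integral\<^sup>L lborel (\<lambda>x::'a. c * indicator (ball 0 r) x) \<le> integral\<^sup>L lborel f"
    by (intro integral_mono assms(1) integrable_mult_right integrable_indicator_ball)
  then show ?thesis using assms(3) by (simp add: content_ball)
qed

lemma integral_le_dyadic:
  fixes f :: "'a::euclidean_space \<Rightarrow> real"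
  assumes "f \<in> borel_measurable lborel" "\<And>x. 0 \<le> f x" "0 < r" "0 \<le> \<kappa>" "0 \<le> A"
    and inner: "\<And>x. norm x < r \<Longrightarrow> f x \<le> A * r powr -\<kappa>"
    and middle: "\<And>x. r \<le> norm x \<Longrightarrow> f x \<le> A * norm x powr -\<kappa>"
    and outer: "\<And>x. r * 2^K \<le> norm x \<Longrightarrow> f x = 0"
  shows "integrable lborel f"
    "integral\<^sup>L lborel f \<le> A * unit_ball_vol DIM('a) * r powr (real DIM('a) - \<kappa>)
       * (1 + (2^DIM('a) - 1) * (\<Sum>k<K. (2 powr (real DIM('a) - \<kappa>))^k))"
proof -
  define H where "H x = A * (r powr -\<kappa> * indicator (ball 0 r) x + dyadic_step r \<kappa> K x)" for x :: 'a
  have bound: "f x \<le> H x" for x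
  proof -
    consider "norm x < r" | "r \<le> norm x" "norm x < r * 2^K" | "r * 2^K \<le> norm x" by linarith
    then show ?thesis
    proof cases
      case 1
      then show ?thesis using inner[OF 1] assms(5) dyadic_step_nonneg[of r \<kappa> K x]
        unfolding H_def by (simp add: distrib_left add_increasing2)
    next
      case 2
      then have "A * norm x powr -\<kappa> \<le> A * dyadic_step r \<kappa> K x"
        using assms(3-5) by (intro mult_left_mono norm_powr_le_dyadic_step) auto
      then show ?thesis using middle[OF 2(1)] 2 unfolding H_def by simp
    next
      case 3
      then show ?thesis using outer[OF 3] assms(2-5) dyadic_step_nonneg[of r \<kappa> K x]
        unfolding H_def by simp
    qed
  qed
  have int: "integrable lborel H"
    unfolding H_def[abs_def]
    by (intro integrable_mult_right Bochner_Integration.integrable_add integrable_indicator_ball integrable_dyadic_step)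
  show "integrable lborel f" by (rule integrable_nonneg_bounded[OF int assms(1,2) bound])
  then have "integral\<^sup>L lborel f \<le> integral\<^sup>L lborel H" by (intro integral_mono int bound)
  also have "integral\<^sup>L lborel H = A * (r powr -\<kappa> * r ^ DIM('a) * unit_ball_vol DIM('a)
      + unit_ball_vol DIM('a) * (2^DIM('a) - 1) * r powr (real DIM('a) - \<kappa>) * (\<Sum>k<K. (2 powr (real DIM('a) - \<kappa>))^k))"
    unfolding H_def[abs_def] integral_dyadic_step[OF assms(3), symmetric] using assms(3)
    by (simp add: content_ball integrable_indicator_ball integrable_dyadic_step)
  also have "r powr -\<kappa> * r ^ DIM('a) = r powr (real DIM('a) - \<kappa>)"
    using assms(3) by (simp add: powr_add[symmetric] powr_realpow[symmetric])
  finally show "integral\<^sup>L lborel f \<le> A * unit_ball_vol DIM('a) * r powr (real DIM('a) - \<kappa>)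
       * (1 + (2^DIM('a) - 1) * (\<Sum>k<K. (2 powr (real DIM('a) - \<kappa>))^k))"
    by (simp add: algebra_simps)
qed

lemma integral_ge_dyadic:
  fixes f :: "'a::euclidean_space \<Rightarrow> real"
  assumes "integrable lborel f" "\<And>x. 0 \<le> f x" "0 < r" "0 \<le> \<kappa>" "0 \<le> c"
    and shells: "\<And>x. r \<le> norm x \<Longrightarrow> norm x < r * 2^K \<Longrightarrow> c * norm x powr -\<kappa> \<le> f x"
  shows "c * 2 powr -\<kappa> * unit_ball_vol DIM('a) * (2^DIM('a) - 1) * r powr (real DIM('a) - \<kappa>)
      * (\<Sum>k<K. (2 powr (real DIM('a) - \<kappa>))^k) \<le> integral\<^sup>L lborel f"
proof -
  have bound: "c * (2 powr -\<kappa> * dyadic_step r \<kappa> K x) \<le> f x" for x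
  proof (cases "\<exists>j<K. x \<in> dyadic_shell r j")
    case True
    then obtain j where "j < K" "x \<in> dyadic_shell r j" by blast
    moreover have "r * 2^(j+1) \<le> r * 2^K"
      using \<open>j < K\<close> assms(3) by (intro mult_left_mono power_increasing) auto
    moreover have "r \<le> r * 2^j" using assms(3) by simp
    ultimately have x: "r \<le> norm x" "norm x < r * 2^K"
      by (auto simp: dyadic_shell_def annulus_def simp del: power_Suc)
    have "c * (2 powr -\<kappa> * dyadic_step r \<kappa> K x) \<le> c * norm x powr -\<kappa>"
      using assms(3-5) by (intro mult_left_mono dyadic_step_le_norm_powr) auto
    then show ?thesis using shells[OF x] by linarith
  next
    case False
    then show ?thesis using dyadic_step_outside[of K x r \<kappa>] assms(2)[of x] by auto
  qed
  have "integral\<^sup>L lborel (\<lambda>x::'a. c * (2 powr -\<kappa> * dyadic_step r \<kappa> K x)) \<le> integral\<^sup>L lborel f"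
    by (intro integral_mono assms(1) bound integrable_mult_right integrable_dyadic_step)
  then show ?thesis using integral_dyadic_step[OF assms(3), of \<kappa> K, where 'a='a] by (simp add: mult_ac)
qed

lemma grad_eq:
  assumes "(f has_derivative (\<lambda>h. g \<bullet> h)) (at x)"
  shows "grad f x = g"
proof -
  have "frechet_derivative f (at x) = (\<lambda>h. g \<bullet> h)" using frechet_derivative_at[OF assms] by simp
  then show ?thesis unfolding grad_def by (simp add: euclidean_representation)
qed

lemma has_derivative_grad:
  assumes "f differentiable (at x)"
  shows "(f has_derivative (\<lambda>h. grad f x \<bullet> h)) (at x)"
proof -
  have D: "(f has_derivative frechet_derivative f (at x)) (at x)"
    using assms by (simp add: frechet_derivative_works)
  then have lin: "linear (frechet_derivative f (at x))" by (rule has_derivative_linear)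
  have "frechet_derivative f (at x) h = grad f x \<bullet> h" for h
  proof -
    have "frechet_derivative f (at x) h = frechet_derivative f (at x) (\<Sum>i\<in>Basis. (h \<bullet> i) *\<^sub>R i)"
      by (simp add: euclidean_representation)
    also have "\<dots> = (\<Sum>i\<in>Basis. (h \<bullet> i) * frechet_derivative f (at x) i)"
      using lin by (simp add: linear_sum linear_cmul)
    finally show ?thesis unfolding grad_def by (simp add: inner_sum_right inner_commute mult.commute)
  qed
  then have "frechet_derivative f (at x) = (\<lambda>h. grad f x \<bullet> h)" by (rule ext)
  then show ?thesis using D by simp
qed

lemma has_derivative_norm_powr:
  fixes x :: "'a::real_inner"
  assumes "1 < a"
  shows "((\<lambda>x. norm x powr a) has_derivative (\<lambda>h. (a * norm x powr (a - 2)) *\<^sub>R x \<bullet> h)) (at x)"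
proof (cases "x = 0")
  case False
  then have nx: "0 < norm x" by simp
  have "((\<lambda>y. norm y powr a) has_derivative (\<lambda>h. a * norm x powr (a - 1) * (h \<bullet> sgn x))) (at x)"
    using has_derivative_compose[OF has_derivative_norm[OF False]
        has_field_derivative_imp_has_derivative[OF has_real_derivative_powr[OF nx, of a]]]
    by simp
  moreover have "norm x powr (a - 1) = norm x powr (a - 2) * norm x"
    using powr_add[of "norm x" "a - 2" 1] by simp
  ultimately show ?thesis
    using nx by (simp add: sgn_div_norm inner_commute field_simps)
next
  case True
  have "((\<lambda>h::'a. norm h powr (a - 1)) \<longlongrightarrow> 0) (at 0)"
    by (rule tendsto_zero_powrI) (auto intro!: tendsto_norm_zero tendsto_ident_at simp: assms)
  moreover have "norm (norm h powr a) / norm h = norm h powr (a - 1)" for h :: 'a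
    by (cases "h = 0") (simp_all add: powr_diff)
  ultimately have "((\<lambda>y. norm y powr a) has_derivative (\<lambda>h::'a. 0)) (at 0)"
    unfolding has_derivative_at by simp
  then show ?thesis using True by simp
qed

section \<open>The Aubin-Talenti bubble\<close>

locale bubble_profile =
  fixes a b :: real
  assumes a_gt_1: "1 < a" and b_pos: "0 < b"
begin

definition bubble :: "real \<Rightarrow> 'a::real_inner \<Rightarrow> real" where
  "bubble e x = (e powr a + norm x powr a) powr -b"

definition bubble_grad :: "real \<Rightarrow> 'a::real_inner \<Rightarrow> 'a" where
  "bubble_grad e x = (- b * (e powr a + norm x powr a) powr (-b - 1) * (a * norm x powr (a - 2))) *\<^sub>R x"

lemma bubble_base_pos: "0 < e \<Longrightarrow> 0 < e powr a + norm x powr a"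
  by (simp add: add_pos_nonneg)

lemma bubble_pos:
  assumes "0 < e"
  shows "0 < bubble e x"
  unfolding bubble_def using bubble_base_pos[OF assms, of x] by simp

lemma measurable_bubble [measurable]: "bubble e \<in> borel_measurable borel"
  unfolding bubble_def[abs_def] by measurable

lemma measurable_bubble_grad [measurable]:
  "(bubble_grad e :: 'a::euclidean_space \<Rightarrow> 'a) \<in> borel_measurable borel"
  unfolding bubble_grad_def[abs_def] by measurable

lemma has_derivative_bubble:
  assumes "0 < e"
  shows "(bubble e has_derivative (\<lambda>h. bubble_grad e x \<bullet> h)) (at x)"
proof -
  define z where "z = e powr a + norm x powr a"
  have "((\<lambda>t. t powr -b) has_derivative (\<lambda>h. (- b * z powr (- b - 1)) * h)) (at z)"
    using bubble_base_pos[OF assms, of x]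
    by (intro has_field_derivative_imp_has_derivative has_real_derivative_powr) (simp_all add: z_def)
  from has_derivative_compose[OF
      has_derivative_add[OF has_derivative_const has_derivative_norm_powr[OF a_gt_1]] this[unfolded z_def]]
  show ?thesis unfolding bubble_def[abs_def] bubble_grad_def z_def by (simp add: mult_ac)
qed

lemma bubble_le_center:
  assumes "0 < e"
  shows "bubble e x \<le> e powr -(a * b)"
proof -
  have "bubble e x \<le> (e powr a) powr -b" unfolding bubble_def
    using assms b_pos bubble_base_pos by (intro powr_mono2') auto
  then show ?thesis by (simp add: powr_powr)
qed

lemma bubble_le_norm:
  assumes "0 < e" "x \<noteq> 0"
  shows "bubble e x \<le> norm x powr -(a * b)"
proof -
  have "bubble e x \<le> (norm x powr a) powr -b" unfolding bubble_def
    using assms b_pos bubble_base_pos by (intro powr_mono2') auto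
  then show ?thesis by (simp add: powr_powr)
qed

lemma bubble_ge_center:
  assumes "0 < e" "norm x \<le> e"
  shows "2 powr -b * e powr -(a * b) \<le> bubble e x"
proof -
  have "norm x powr a \<le> e powr a" using assms a_gt_1 by (intro powr_mono2) auto
  then have "(2 * e powr a) powr -b \<le> bubble e x" unfolding bubble_def
    using assms b_pos bubble_base_pos by (intro powr_mono2') auto
  then show ?thesis using assms by (simp add: powr_mult powr_powr)
qed

lemma norm_bubble_grad:
  "norm (bubble_grad e x) = a * b * (e powr a + norm x powr a) powr (-b - 1) * norm x powr (a - 1)"
proof (cases "x = 0")
  case False
  have "norm x powr (a - 1) = norm x powr (a - 2) * norm x"
    using powr_add[of "norm x" "a - 2" 1] False by simp
  then show ?thesis
    unfolding bubble_grad_def using a_gt_1 b_pos by (simp add: abs_mult mult_ac)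
qed (simp add: bubble_grad_def)

lemma bubble_grad_exponent: "a * (-b - 1) + (a - 1) = -(a * b) - 1"
  by (simp add: algebra_simps)

lemma norm_bubble_grad_le_center:
  assumes "0 < e" "norm x \<le> e"
  shows "norm (bubble_grad e x) \<le> a * b * e powr (-(a * b) - 1)"
proof -
  have "(e powr a + norm x powr a) powr (-b - 1) * norm x powr (a - 1) \<le> (e powr a) powr (-b - 1) * e powr (a - 1)"
    using assms a_gt_1 b_pos bubble_base_pos by (intro mult_mono powr_mono2' powr_mono2) auto
  also have "\<dots> = e powr (-(a * b) - 1)"
    using assms by (simp add: powr_powr powr_add[symmetric] bubble_grad_exponent)
  finally show ?thesis
    unfolding norm_bubble_grad using a_gt_1 b_pos by (simp add: mult.assoc mult_left_mono)
qed

lemma norm_bubble_grad_le_norm: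
  assumes "0 < e" "x \<noteq> 0"
  shows "norm (bubble_grad e x) \<le> a * b * norm x powr (-(a * b) - 1)"
proof -
  have "(e powr a + norm x powr a) powr (-b - 1) * norm x powr (a - 1) \<le> (norm x powr a) powr (-b - 1) * norm x powr (a - 1)"
    using assms b_pos bubble_base_pos by (intro mult_right_mono powr_mono2') auto
  also have "\<dots> = norm x powr (-(a * b) - 1)"
    by (simp add: powr_powr powr_add[symmetric] bubble_grad_exponent)
  finally show ?thesis
    unfolding norm_bubble_grad using a_gt_1 b_pos by (simp add: mult.assoc mult_left_mono)
qed

lemma norm_bubble_grad_ge:
  assumes "0 < e" "e \<le> norm x"
  shows "a * b * 2 powr (-b - 1) * norm x powr (-(a * b) - 1) \<le> norm (bubble_grad e x)"
proof -
  have "e powr a \<le> norm x powr a" using assms a_gt_1 by (intro powr_mono2) auto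
  then have "(2 * norm x powr a) powr (-b - 1) * norm x powr (a - 1)
      \<le> (e powr a + norm x powr a) powr (-b - 1) * norm x powr (a - 1)"
    using assms b_pos bubble_base_pos by (intro mult_right_mono powr_mono2') auto
  moreover have "(2 * norm x powr a) powr (-b - 1) * norm x powr (a - 1) = 2 powr (-b - 1) * norm x powr (-(a * b) - 1)"
    using assms by (simp add: powr_mult powr_powr powr_add[symmetric] bubble_grad_exponent)
  ultimately show ?thesis
    unfolding norm_bubble_grad using a_gt_1 b_pos by (simp add: mult.assoc mult_left_mono)
qed

end

section \<open>The cut-off bubble\<close>

locale cutoff_bubble =
  fixes \<psi> :: "'a::euclidean_space \<Rightarrow> real" and \<rho> p :: real
  assumes rho_pos: "0 < \<rho>"
    and psi_differentiable: "\<And>x. \<psi> differentiable (at x)"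
    and psi_partials_continuous: "\<And>i. i \<in> Basis \<Longrightarrow> continuous_on UNIV (\<lambda>x. frechet_derivative \<psi> (at x) i)"
    and psi_support: "closure {x. \<psi> x \<noteq> 0} \<subseteq> ball 0 \<rho>"
    and psi_range: "\<And>x. 0 \<le> \<psi> x \<and> \<psi> x \<le> 1"
    and psi_one: "\<And>x. x \<in> ball 0 (\<rho>/2) \<Longrightarrow> \<psi> x = 1"
    and p_gt_1: "1 < p" and p_lt_dim: "p < real DIM('a)"
begin

sublocale bubble_profile "p / (p - 1)" "(real DIM('a) - p) / p"
  using p_gt_1 p_lt_dim by unfold_locales (auto simp: field_simps)

definition \<gamma> :: real where "\<gamma> = (real DIM('a) - p) / (p - 1)"

lemma gamma_pos: "0 < \<gamma>"
  using p_gt_1 p_lt_dim unfolding \<gamma>_def by simp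

lemma bubble_decay: "p / (p - 1) * ((real DIM('a) - p) / p) = \<gamma>"
  using p_gt_1 unfolding \<gamma>_def by (simp add: field_simps)

abbreviation u :: "real \<Rightarrow> real \<Rightarrow> 'a \<Rightarrow> real" where
  "u \<equiv> u_fun (real DIM('a)) p \<psi>"

lemma u_eq: "u e \<delta> x = \<psi> ((1 / \<delta>) *\<^sub>R x) * bubble e x"
  unfolding u_fun_def bubble_def by (simp add: minus_divide_left)

definition u_grad :: "real \<Rightarrow> real \<Rightarrow> 'a \<Rightarrow> 'a" where
  "u_grad e \<delta> x = \<psi> ((1 / \<delta>) *\<^sub>R x) *\<^sub>R bubble_grad e x + (bubble e x / \<delta>) *\<^sub>R grad \<psi> ((1 / \<delta>) *\<^sub>R x)"

abbreviation grad_moment :: "real \<Rightarrow> real \<Rightarrow> real \<Rightarrow> real" where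
  "grad_moment q e \<delta> \<equiv> integral\<^sup>L lborel (\<lambda>x. norm (u_grad e \<delta> x) powr q)"

lemma continuous_grad_psi: "continuous_on UNIV (grad \<psi>)"
  unfolding grad_def[abs_def]
  by (intro continuous_on_sum continuous_on_scaleR psi_partials_continuous continuous_on_const) auto

lemma measurable_psi [measurable]: "\<psi> \<in> borel_measurable borel"
  using psi_differentiable
  by (intro borel_measurable_continuous_onI differentiable_imp_continuous_on) (simp add: differentiable_on_def differentiable_at_withinI)

lemma measurable_grad_psi [measurable]: "grad \<psi> \<in> borel_measurable borel"
  using continuous_grad_psi by (rule borel_measurable_continuous_onI)

lemma measurable_u_grad [measurable]: "u_grad e \<delta> \<in> borel_measurable borel"
  unfolding u_grad_def[abs_def] by measurable

lemma measurable_u [measurable]: "u e \<delta> \<in> borel_measurable borel"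
  unfolding u_eq[abs_def] by measurable

lemma grad_psi_eq_0_if_const:
  assumes "open T" "y \<in> T" "\<And>z. z \<in> T \<Longrightarrow> \<psi> z = c"
  shows "grad \<psi> y = 0"
proof (rule grad_eq)
  have "((\<lambda>_. c) has_derivative (\<lambda>h. 0 \<bullet> h)) (at y)" by simp
  then show "(\<psi> has_derivative (\<lambda>h. 0 \<bullet> h)) (at y)"
    by (rule has_derivative_transform_within_open[OF _ assms(1,2)]) (use assms(3) in auto)
qed

lemma psi_outside: "\<rho> \<le> norm y \<Longrightarrow> \<psi> y = 0"
  using psi_support closure_subset[of "{x. \<psi> x \<noteq> 0}"] by force

lemma grad_psi_outside: "\<rho> \<le> norm y \<Longrightarrow> grad \<psi> y = 0"
  using psi_support closure_subset[of "{x. \<psi> x \<noteq> 0}"]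
  by (intro grad_psi_eq_0_if_const[of "- closure {x. \<psi> x \<noteq> 0}" _ 0]) force+

lemma grad_psi_inside: "norm y < \<rho> / 2 \<Longrightarrow> grad \<psi> y = 0"
  by (rule grad_psi_eq_0_if_const[of "ball 0 (\<rho>/2)" _ 1]) (use psi_one in auto)

lemma grad_psi_bounded:
  obtains M where "0 < M" "\<And>y. norm (grad \<psi> y) \<le> M"
proof -
  have "compact (grad \<psi> ` cball 0 \<rho>)"
    by (intro compact_continuous_image continuous_on_subset[OF continuous_grad_psi]) auto
  then obtain M where M: "\<And>z. z \<in> grad \<psi> ` cball 0 \<rho> \<Longrightarrow> norm z \<le> M"
    using compact_imp_bounded bounded_iff by metis
  have "norm (grad \<psi> y) \<le> max M 1" for y
    using M[of "grad \<psi> y"] grad_psi_outside[of y] by (cases "norm y \<le> \<rho>") auto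
  then show thesis using that[of "max M 1"] by auto
qed

lemma has_derivative_u:
  assumes "0 < e"
  shows "(u e \<delta> has_derivative (\<lambda>h. u_grad e \<delta> x \<bullet> h)) (at x)"
proof -
  have "((\<lambda>x. (1/\<delta>) *\<^sub>R x) has_derivative (\<lambda>h. (1/\<delta>) *\<^sub>R h)) (at x)"
    by (intro has_derivative_scaleR_right has_derivative_ident)
  from has_derivative_compose[OF this has_derivative_grad[OF psi_differentiable]]
  have "((\<lambda>x. \<psi> ((1/\<delta>) *\<^sub>R x)) has_derivative (\<lambda>h. grad \<psi> ((1/\<delta>) *\<^sub>R x) \<bullet> ((1/\<delta>) *\<^sub>R h))) (at x)"
    by simp
  from has_derivative_mult[OF this has_derivative_bubble[OF assms]]
  show ?thesis unfolding u_eq[abs_def] u_grad_def by (simp add: inner_add_left algebra_simps)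
qed

lemma grad_scaled_u:
  assumes "0 < e"
  shows "grad (\<lambda>x. u e \<delta> x / L) x = (1 / L) *\<^sub>R u_grad e \<delta> x"
proof (rule grad_eq)
  have "((\<lambda>x. u e \<delta> x * (1/L)) has_derivative (\<lambda>h. (u_grad e \<delta> x \<bullet> h) * (1/L))) (at x)"
    by (rule has_derivative_mult_left[OF has_derivative_u[OF assms]])
  then show "((\<lambda>x. u e \<delta> x / L) has_derivative (\<lambda>h. ((1 / L) *\<^sub>R u_grad e \<delta> x) \<bullet> h)) (at x)"
    by (simp add: mult_ac)
qed

lemma u_nonneg:
  assumes "0 < e"
  shows "0 \<le> u e \<delta> x"
  unfolding u_eq using psi_range[of "(1/\<delta>) *\<^sub>R x"] bubble_pos[OF assms, of x] by simp

lemma u_le_bubble: "0 < e \<Longrightarrow> u e \<delta> x \<le> bubble e x"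
  unfolding u_eq using psi_range[of "(1/\<delta>) *\<^sub>R x"] bubble_pos[of e x]
  by (simp add: mult_left_le_one_le less_imp_le)

lemma u_outside: "0 < \<delta> \<Longrightarrow> \<delta> * \<rho> \<le> norm x \<Longrightarrow> u e \<delta> x = 0"
  unfolding u_eq by (simp add: psi_outside field_simps)

lemma u_inside: "0 < \<delta> \<Longrightarrow> norm x < \<delta> * \<rho> / 2 \<Longrightarrow> u e \<delta> x = bubble e x"
  unfolding u_eq by (simp add: psi_one field_simps)

lemma u_grad_inside: "0 < \<delta> \<Longrightarrow> norm x < \<delta> * \<rho> / 2 \<Longrightarrow> u_grad e \<delta> x = bubble_grad e x"
  unfolding u_grad_def by (simp add: psi_one grad_psi_inside field_simps)

lemma u_grad_outside: "0 < \<delta> \<Longrightarrow> \<delta> * \<rho> \<le> norm x \<Longrightarrow> u_grad e \<delta> x = 0"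
  unfolding u_grad_def by (simp add: psi_outside grad_psi_outside field_simps)

lemma u_powr_le_center:
  assumes "0 < e" "0 \<le> t"
  shows "u e \<delta> x powr t \<le> e powr -(\<gamma> * t)"
proof -
  have "u e \<delta> x \<le> e powr -\<gamma>"
    using u_le_bubble[OF assms(1)] bubble_le_center[OF assms(1), unfolded bubble_decay] by (rule order_trans)
  then have "u e \<delta> x powr t \<le> (e powr -\<gamma>) powr t" using u_nonneg[OF assms(1)] assms(2) by (intro powr_mono2)
  then show ?thesis by (simp add: powr_powr)
qed

lemma u_powr_le_norm:
  assumes "0 < e" "0 \<le> t" "x \<noteq> 0"
  shows "u e \<delta> x powr t \<le> norm x powr -(\<gamma> * t)"
proof -
  have "u e \<delta> x \<le> norm x powr -\<gamma>"
    using u_le_bubble[OF assms(1)] bubble_le_norm[OF assms(1,3), unfolded bubble_decay] by (rule order_trans)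
  then have "u e \<delta> x powr t \<le> (norm x powr -\<gamma>) powr t" using u_nonneg[OF assms(1)] assms(2) by (intro powr_mono2)
  then show ?thesis by (simp add: powr_powr)
qed

lemma moment_le:
  assumes t: "0 < t" "real DIM('a) < \<gamma> * t" and e: "0 < e" and \<delta>: "0 < \<delta>"
  shows "integrable lborel (\<lambda>x. u e \<delta> x powr t)"
    "integral\<^sup>L lborel (\<lambda>x. u e \<delta> x powr t)
       \<le> unit_ball_vol DIM('a) * (1 + (2^DIM('a) - 1) / (1 - 2 powr (real DIM('a) - \<gamma> * t)))
         * e powr (real DIM('a) - \<gamma> * t)"
proof -
  obtain K where "\<delta> * \<rho> / e < 2^K" using real_arch_pow[of 2 "\<delta> * \<rho> / e"] by auto
  then have K: "\<delta> * \<rho> \<le> e * 2^K" using e by (simp add: field_simps)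
  have inner: "u e \<delta> x powr t \<le> 1 * e powr -(\<gamma> * t)" for x
    using u_powr_le_center[OF e] t by simp
  have middle: "u e \<delta> x powr t \<le> 1 * norm x powr -(\<gamma> * t)" if "e \<le> norm x" for x
  proof -
    have "x \<noteq> 0" using that e by auto
    then show ?thesis using u_powr_le_norm[OF e, of t x \<delta>] t by simp
  qed
  have outer: "u e \<delta> x powr t = 0" if "e * 2^K \<le> norm x" for x
    using u_outside[OF \<delta>, of x] that K by simp
  have "(\<lambda>x. u e \<delta> x powr t) \<in> borel_measurable lborel" by measurable
  note upper = integral_le_dyadic[OF this _ e _ _ inner middle outer]
  show "integrable lborel (\<lambda>x. u e \<delta> x powr t)" using upper(1) gamma_pos t by simp
  define x0 where "x0 = (2::real) powr (real DIM('a) - \<gamma> * t)"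
  have x0: "0 \<le> x0" "x0 < 1" unfolding x0_def using t by (auto intro!: powr_less_one)
  have "(2^DIM('a) - 1) * (\<Sum>k<K. x0^k) \<le> (2^DIM('a) - 1) * (1 / (1 - x0))"
    using geometric_sum_le_of_lt_1[OF x0, of K] by (intro mult_left_mono) auto
  then have "unit_ball_vol DIM('a) * e powr (real DIM('a) - \<gamma> * t) * (1 + (2^DIM('a) - 1) * (\<Sum>k<K. x0^k))
      \<le> unit_ball_vol DIM('a) * (1 + (2^DIM('a) - 1) / (1 - x0)) * e powr (real DIM('a) - \<gamma> * t)"
    by (simp add: mult_left_mono mult_ac)
  moreover have "integral\<^sup>L lborel (\<lambda>x. u e \<delta> x powr t)
      \<le> unit_ball_vol DIM('a) * e powr (real DIM('a) - \<gamma> * t) * (1 + (2^DIM('a) - 1) * (\<Sum>k<K. x0^k))"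
    using upper(2) gamma_pos t unfolding x0_def by simp
  ultimately show "integral\<^sup>L lborel (\<lambda>x. u e \<delta> x powr t)
       \<le> unit_ball_vol DIM('a) * (1 + (2^DIM('a) - 1) / (1 - 2 powr (real DIM('a) - \<gamma> * t)))
         * e powr (real DIM('a) - \<gamma> * t)"
    unfolding x0_def by linarith
qed

lemma moment_ge:
  assumes t: "0 < t" "real DIM('a) < \<gamma> * t" and e: "0 < e" "e \<le> \<delta> * \<rho> / 2" and \<delta>: "0 < \<delta>"
  shows "2 powr -((real DIM('a) - p) / p * t) * unit_ball_vol DIM('a) * e powr (real DIM('a) - \<gamma> * t)
    \<le> integral\<^sup>L lborel (\<lambda>x. u e \<delta> x powr t)"
proof -
  have "(2 powr -((real DIM('a) - p) / p) * e powr -\<gamma>) powr t \<le> u e \<delta> x powr t" if "norm x < e" for x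
    using that t e bubble_ge_center[OF e(1), of x, unfolded bubble_decay] u_inside[OF \<delta>, of x]
    by (intro powr_mono2) auto
  from integral_ge_on_ball[OF moment_le(1)[OF t e(1) \<delta>] _ _ this] e
  have "(2 powr -((real DIM('a) - p) / p) * e powr -\<gamma>) powr t * unit_ball_vol DIM('a) * e ^ DIM('a)
      \<le> integral\<^sup>L lborel (\<lambda>x. u e \<delta> x powr t)"
    by simp
  moreover have "(2 powr -((real DIM('a) - p) / p) * e powr -\<gamma>) powr t * e ^ DIM('a)
      = 2 powr -((real DIM('a) - p) / p * t) * e powr (real DIM('a) - \<gamma> * t)"
    using e(1) by (simp add: powr_mult powr_powr powr_realpow[symmetric] powr_add[symmetric] mult_ac)
  ultimately show ?thesis by (simp add: mult_ac)
qed

lemma norm_u_grad_le: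
  assumes "0 < e" "0 < \<delta>" "\<And>y. norm (grad \<psi> y) \<le> M"
  shows "norm (u_grad e \<delta> x) \<le> indicator (ball 0 (\<delta> * \<rho>)) x * norm (bubble_grad e x)
     + indicator (annulus (\<delta> * \<rho> / 2) (\<delta> * \<rho>)) x * (M / \<delta> * bubble e x)"
proof -
  consider "norm x < \<delta> * \<rho> / 2" | "\<delta> * \<rho> / 2 \<le> norm x" "norm x < \<delta> * \<rho>" | "\<delta> * \<rho> \<le> norm x"
    by linarith
  then show ?thesis
  proof cases
    case 1
    moreover have "0 < \<delta> * \<rho>" using assms(2) rho_pos by simp
    then have "norm x < \<delta> * \<rho>" using 1 by linarith
    ultimately show ?thesis using u_grad_inside[OF assms(2) 1] by (simp add: annulus_def)
  next
    case 2
    have "norm (u_grad e \<delta> x) \<le> norm (\<psi> ((1 / \<delta>) *\<^sub>R x) *\<^sub>R bubble_grad e x)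
        + norm ((bubble e x / \<delta>) *\<^sub>R grad \<psi> ((1 / \<delta>) *\<^sub>R x))"
      unfolding u_grad_def by (rule norm_triangle_ineq)
    also have "norm (\<psi> ((1 / \<delta>) *\<^sub>R x) *\<^sub>R bubble_grad e x) \<le> norm (bubble_grad e x)"
      using psi_range[of "(1 / \<delta>) *\<^sub>R x"] by (simp add: mult_left_le_one_le)
    also have "norm ((bubble e x / \<delta>) *\<^sub>R grad \<psi> ((1 / \<delta>) *\<^sub>R x)) \<le> bubble e x / \<delta> * M"
      using bubble_pos[OF assms(1), of x] assms(2) assms(3)[of "(1 / \<delta>) *\<^sub>R x"]
      by (simp add: mult_left_mono divide_right_mono less_imp_le)
    finally show ?thesis using 2 by (simp add: annulus_def mult_ac)
  next
    case 3
    then show ?thesis using u_grad_outside[OF assms(2) 3] by (simp add: annulus_def)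
  qed
qed

lemma integral_bubble_grad_on_ball:
  assumes "0 < q" "0 < e" "0 \<le> R" "R \<le> e * 2^K"
  defines "f \<equiv> \<lambda>x::'a. (indicator (ball 0 R) x * norm (bubble_grad e x)) powr q"
  shows "integrable lborel f"
    "integral\<^sup>L lborel f \<le> \<gamma> powr q * unit_ball_vol DIM('a) * e powr (real DIM('a) - q * (\<gamma> + 1))
       * (1 + (2^DIM('a) - 1) * (\<Sum>k<K. (2 powr (real DIM('a) - q * (\<gamma> + 1)))^k))"
proof -
  have exp: "(-\<gamma> - 1) * q = -(q * (\<gamma> + 1))" by (simp add: algebra_simps)
  have inner: "f x \<le> \<gamma> powr q * e powr -(q * (\<gamma> + 1))" if "norm x < e" for x
  proof -
    have "indicator (ball 0 R) x * norm (bubble_grad e x) \<le> \<gamma> * e powr (-\<gamma> - 1)"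
      using norm_bubble_grad_le_center[OF assms(2), of x, unfolded bubble_decay] that gamma_pos
      by (simp add: indicator_def)
    then have "f x \<le> (\<gamma> * e powr (-\<gamma> - 1)) powr q" unfolding f_def using assms(1) by (intro powr_mono2) auto
    then show ?thesis using gamma_pos by (simp add: powr_mult powr_powr exp)
  qed
  have middle: "f x \<le> \<gamma> powr q * norm x powr -(q * (\<gamma> + 1))" if "e \<le> norm x" for x
  proof -
    have "x \<noteq> 0" using that assms(2) by auto
    then have "indicator (ball 0 R) x * norm (bubble_grad e x) \<le> \<gamma> * norm x powr (-\<gamma> - 1)"
      using norm_bubble_grad_le_norm[OF assms(2), of x, unfolded bubble_decay] gamma_pos
      by (simp add: indicator_def)
    then have "f x \<le> (\<gamma> * norm x powr (-\<gamma> - 1)) powr q" unfolding f_def using assms(1) by (intro powr_mono2) auto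
    then show ?thesis using gamma_pos by (simp add: powr_mult powr_powr exp)
  qed
  have outer: "f x = 0" if "e * 2^K \<le> norm x" for x
    using that assms(4) unfolding f_def by simp
  have "f \<in> borel_measurable lborel" unfolding f_def by measurable
  note dyadic = integral_le_dyadic[OF this _ assms(2) _ _ inner middle outer]
  have "0 \<le> f x" for x unfolding f_def by simp
  show "integrable lborel f" using dyadic(1) \<open>\<And>x. 0 \<le> f x\<close> gamma_pos assms(1) by simp
  show "integral\<^sup>L lborel f \<le> \<gamma> powr q * unit_ball_vol DIM('a) * e powr (real DIM('a) - q * (\<gamma> + 1))
       * (1 + (2^DIM('a) - 1) * (\<Sum>k<K. (2 powr (real DIM('a) - q * (\<gamma> + 1)))^k))"
    using dyadic(2) \<open>\<And>x. 0 \<le> f x\<close> gamma_pos assms(1) by simp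
qed

lemma integral_cutoff_grad_on_annulus:
  assumes "0 < q" "0 < \<delta>" "0 \<le> M" "0 < e"
  defines "f \<equiv> \<lambda>x::'a. (indicator (annulus (\<delta> * \<rho> / 2) (\<delta> * \<rho>)) x * (M / \<delta> * bubble e x)) powr q"
  shows "integrable lborel f"
    "integral\<^sup>L lborel f \<le> (M * (\<rho> / 2) powr -\<gamma>) powr q * unit_ball_vol DIM('a) * \<rho> ^ DIM('a)
       * \<delta> powr (real DIM('a) - q * (\<gamma> + 1))"
proof -
  have \<delta>\<rho>: "0 < \<delta> * \<rho>" using assms(2) rho_pos by simp
  have bound: "f x \<le> (M * (\<rho> / 2) powr -\<gamma> * \<delta> powr (-\<gamma> - 1)) powr q" for x
  proof (cases "x \<in> annulus (\<delta> * \<rho> / 2) (\<delta> * \<rho>)")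
    case True
    then have x: "\<delta> * \<rho> / 2 \<le> norm x" "x \<noteq> 0" using \<delta>\<rho> by (auto simp: annulus_def)
    have "bubble e x \<le> (\<delta> * \<rho> / 2) powr -\<gamma>"
      using bubble_le_norm[OF assms(4) x(2), unfolded bubble_decay]
        powr_mono2'[of "-\<gamma>" "\<delta> * \<rho> / 2" "norm x"] x(1) \<delta>\<rho> gamma_pos
      by simp
    then have "M / \<delta> * bubble e x \<le> M / \<delta> * (\<delta> * \<rho> / 2) powr -\<gamma>"
      using assms(2,3) by (intro mult_left_mono) auto
    also have "\<dots> = M * (\<rho> / 2) powr -\<gamma> * \<delta> powr (-\<gamma> - 1)"
    proof -
      have "(\<delta> * \<rho> / 2) powr -\<gamma> = \<delta> powr -\<gamma> * (\<rho> / 2) powr -\<gamma>"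
        using assms(2) rho_pos by (simp add: powr_mult[symmetric])
      moreover have "\<delta> powr (-\<gamma> - 1) = \<delta> powr -\<gamma> / \<delta>" using assms(2) by (simp add: powr_diff)
      ultimately show ?thesis by simp
    qed
    finally show ?thesis
      unfolding f_def using True assms(1,2,3) bubble_pos[OF assms(4), of x] by (intro powr_mono2) auto
  qed (simp add: f_def)
  have "f \<in> borel_measurable lborel" unfolding f_def by measurable
  note ball = integral_le_on_ball[OF this _ less_imp_le[OF \<delta>\<rho>] bound]
  have outer: "f x = 0" if "\<delta> * \<rho> \<le> norm x" for x using that unfolding f_def by (simp add: annulus_def)
  show "integrable lborel f" using ball(1)[OF _ outer] unfolding f_def by simp
  have "(M * (\<rho> / 2) powr -\<gamma> * \<delta> powr (-\<gamma> - 1)) powr q * (\<delta> * \<rho>) ^ DIM('a)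
      = (M * (\<rho> / 2) powr -\<gamma>) powr q * \<rho> ^ DIM('a) * \<delta> powr (real DIM('a) - q * (\<gamma> + 1))"
    using assms(2,3) rho_pos
    by (simp add: powr_mult powr_powr power_mult_distrib powr_realpow[symmetric] powr_add[symmetric] algebra_simps)
  then show "integral\<^sup>L lborel f \<le> (M * (\<rho> / 2) powr -\<gamma>) powr q * unit_ball_vol DIM('a) * \<rho> ^ DIM('a)
       * \<delta> powr (real DIM('a) - q * (\<gamma> + 1))"
    using ball(2)[OF _ outer] unfolding f_def by (simp add: mult_ac)
qed

lemma grad_moment_le:
  assumes q: "0 < q" and M: "0 < M" "\<And>y. norm (grad \<psi> y) \<le> M"
    and e: "0 < e" and \<delta>: "0 < \<delta>" and K: "\<delta> * \<rho> \<le> e * 2^K"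
  shows "integrable lborel (\<lambda>x. norm (u_grad e \<delta> x) powr q)"
    "grad_moment q e \<delta> \<le> 2 powr q * (\<gamma> powr q * unit_ball_vol DIM('a) * e powr (real DIM('a) - q * (\<gamma> + 1))
        * (1 + (2^DIM('a) - 1) * (\<Sum>k<K. (2 powr (real DIM('a) - q * (\<gamma> + 1)))^k))
      + (M * (\<rho> / 2) powr -\<gamma>) powr q * unit_ball_vol DIM('a) * \<rho> ^ DIM('a) * \<delta> powr (real DIM('a) - q * (\<gamma> + 1)))"
proof -
  define f1 where "f1 x = (indicator (ball 0 (\<delta> * \<rho>)) x * norm (bubble_grad e x)) powr q" for x :: 'a
  define f2 where "f2 x = (indicator (annulus (\<delta> * \<rho> / 2) (\<delta> * \<rho>)) x * (M / \<delta> * bubble e x)) powr q"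
    for x :: 'a
  note part1 = integral_bubble_grad_on_ball[OF q e _ K, folded f1_def]
  note part2 = integral_cutoff_grad_on_annulus[OF q \<delta> less_imp_le[OF M(1)] e, folded f2_def]
  have bound: "norm (u_grad e \<delta> x) powr q \<le> 2 powr q * (f1 x + f2 x)" for x
  proof -
    have "norm (u_grad e \<delta> x) powr q
        \<le> (indicator (ball 0 (\<delta> * \<rho>)) x * norm (bubble_grad e x)
           + indicator (annulus (\<delta> * \<rho> / 2) (\<delta> * \<rho>)) x * (M / \<delta> * bubble e x)) powr q"
      using norm_u_grad_le[OF e \<delta> M(2), of x] q by (intro powr_mono2) auto
    also have "\<dots> \<le> 2 powr q * (f1 x + f2 x)"
      unfolding f1_def f2_def using M(1) \<delta> bubble_pos[OF e, of x] q by (intro powr_add_le) auto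
    finally show ?thesis .
  qed
  have int: "integrable lborel (\<lambda>x. 2 powr q * (f1 x + f2 x))"
    using part1(1) part2(1) rho_pos \<delta> by (intro integrable_mult_right Bochner_Integration.integrable_add) auto
  have "(\<lambda>x. norm (u_grad e \<delta> x) powr q) \<in> borel_measurable lborel" by measurable
  from integrable_nonneg_bounded[OF int this _ bound]
  show int_grad: "integrable lborel (\<lambda>x. norm (u_grad e \<delta> x) powr q)" by simp
  have "grad_moment q e \<delta> \<le> 2 powr q * (integral\<^sup>L lborel f1 + integral\<^sup>L lborel f2)"
    using integral_mono[OF int_grad int bound] part1(1) part2(1) rho_pos \<delta> by simp
  also have "\<dots> \<le> 2 powr q * (\<gamma> powr q * unit_ball_vol DIM('a) * e powr (real DIM('a) - q * (\<gamma> + 1))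
        * (1 + (2^DIM('a) - 1) * (\<Sum>k<K. (2 powr (real DIM('a) - q * (\<gamma> + 1)))^k))
      + (M * (\<rho> / 2) powr -\<gamma>) powr q * unit_ball_vol DIM('a) * \<rho> ^ DIM('a) * \<delta> powr (real DIM('a) - q * (\<gamma> + 1)))"
    using part1(2) part2(2) rho_pos \<delta> by (intro mult_left_mono add_mono) auto
  finally show "grad_moment q e \<delta> \<le> \<dots>" .
qed

lemma grad_moment_upper:
  assumes q: "0 < q"
  obtains C1 C2 where "0 < C1" "0 < C2"
    "\<And>e \<delta> K. 0 < e \<Longrightarrow> 0 < \<delta> \<Longrightarrow> \<delta> * \<rho> \<le> e * 2^K \<Longrightarrow>
       grad_moment q e \<delta>
         \<le> C1 * e powr (real DIM('a) - q * (\<gamma> + 1)) * (1 + (\<Sum>k<K. (2 powr (real DIM('a) - q * (\<gamma> + 1)))^k))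
           + C2 * \<delta> powr (real DIM('a) - q * (\<gamma> + 1))"
proof -
  obtain M where M: "0 < M" "\<And>y. norm (grad \<psi> y) \<le> M" using grad_psi_bounded by blast
  define \<theta> where "\<theta> = real DIM('a) - q * (\<gamma> + 1)"
  define C1 where "C1 = 2 powr q * \<gamma> powr q * unit_ball_vol DIM('a) * 2^DIM('a)"
  define C2 where "C2 = 2 powr q * (M * (\<rho> / 2) powr -\<gamma>) powr q * unit_ball_vol DIM('a) * \<rho> ^ DIM('a)"
  have "0 < C1" "0 < C2" unfolding C1_def C2_def using gamma_pos M(1) rho_pos by auto
  moreover have "grad_moment q e \<delta> \<le> C1 * e powr \<theta> * (1 + (\<Sum>k<K. (2 powr \<theta>)^k)) + C2 * \<delta> powr \<theta>"
    if e: "0 < e" and \<delta>: "0 < \<delta>" and K: "\<delta> * \<rho> \<le> e * 2^K" for e \<delta> K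
  proof -
    have "0 \<le> (\<Sum>k<K. (2 powr \<theta>)^k)" by (intro sum_nonneg) simp
    then have "1 + (2^DIM('a) - 1) * (\<Sum>k<K. (2 powr \<theta>)^k) \<le> 2^DIM('a) * (1 + (\<Sum>k<K. (2 powr \<theta>)^k))"
      by (intro one_add_mult_le_mult one_le_power) simp_all
    then have "2 powr q * \<gamma> powr q * unit_ball_vol DIM('a) * e powr \<theta> * (1 + (2^DIM('a) - 1) * (\<Sum>k<K. (2 powr \<theta>)^k))
        \<le> 2 powr q * \<gamma> powr q * unit_ball_vol DIM('a) * e powr \<theta> * (2^DIM('a) * (1 + (\<Sum>k<K. (2 powr \<theta>)^k)))"
      by (rule mult_left_mono) simp
    with grad_moment_le(2)[OF q M e \<delta> K, folded \<theta>_def] show ?thesis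
      unfolding C1_def C2_def by (simp add: algebra_simps)
  qed
  ultimately show thesis using that unfolding \<theta>_def by blast
qed

lemma grad_moment_lower:
  assumes q: "0 < q"
  obtains c where "0 < c"
    "\<And>e \<delta> K. 0 < e \<Longrightarrow> 0 < \<delta> \<Longrightarrow> e * 2^K \<le> \<delta> * \<rho> / 2 \<Longrightarrow>
       c * e powr (real DIM('a) - q * (\<gamma> + 1)) * (\<Sum>k<K. (2 powr (real DIM('a) - q * (\<gamma> + 1)))^k)
         \<le> grad_moment q e \<delta>"
proof -
  obtain M where M: "0 < M" "\<And>y. norm (grad \<psi> y) \<le> M" using grad_psi_bounded by blast
  define c0 where "c0 = (\<gamma> * 2 powr (-((real DIM('a) - p) / p) - 1)) powr q"
  define c where "c = c0 * 2 powr -(q * (\<gamma> + 1)) * unit_ball_vol DIM('a) * (2^DIM('a) - 1)"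
  have "0 < c0" unfolding c0_def using gamma_pos by simp
  moreover have "1 < (2::real)^DIM('a)" by (simp add: DIM_positive)
  ultimately have "0 < c" unfolding c_def by simp
  moreover have "c * e powr (real DIM('a) - q * (\<gamma> + 1)) * (\<Sum>k<K. (2 powr (real DIM('a) - q * (\<gamma> + 1)))^k)
         \<le> grad_moment q e \<delta>"
    if e: "0 < e" and \<delta>: "0 < \<delta>" and K: "e * 2^K \<le> \<delta> * \<rho> / 2" for e \<delta> K
  proof -
    obtain K0 where "\<delta> * \<rho> / e < 2^K0" using real_arch_pow[of 2 "\<delta> * \<rho> / e"] by auto
    then have "\<delta> * \<rho> \<le> e * 2^K0" using e by (simp add: field_simps)
    note int = grad_moment_le(1)[OF q M e \<delta> this]
    have "c0 * norm x powr -(q * (\<gamma> + 1)) \<le> norm (u_grad e \<delta> x) powr q"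
      if x: "e \<le> norm x" "norm x < e * 2^K" for x
    proof -
      have "norm x < \<delta> * \<rho> / 2" using x K by linarith
      then have "u_grad e \<delta> x = bubble_grad e x" by (rule u_grad_inside[OF \<delta>])
      then have "(\<gamma> * 2 powr (-((real DIM('a) - p) / p) - 1) * norm x powr (-\<gamma> - 1)) powr q
          \<le> norm (u_grad e \<delta> x) powr q"
        using norm_bubble_grad_ge[OF e x(1), unfolded bubble_decay] gamma_pos q
        by (intro powr_mono2) (auto simp: mult.assoc)
      moreover have "(-\<gamma> - 1) * q = -(q * (\<gamma> + 1))" by (simp add: algebra_simps)
      ultimately show ?thesis
        unfolding c0_def using gamma_pos by (simp add: powr_mult powr_powr)
    qed
    from integral_ge_dyadic[OF int _ e _ _ this]
    show ?thesis unfolding c_def using gamma_pos q \<open>0 < c0\<close> by (simp add: mult_ac)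
  qed
  ultimately show thesis using that by blast
qed

lemma critical_exponent:
  "q * (\<gamma> + 1) - real DIM('a)
     = (real DIM('a) - 1) / (p - 1) * (q - real DIM('a) * (p - 1) / (real DIM('a) - 1))"
proof -
  have \<gamma>: "\<gamma> + 1 = (real DIM('a) - 1) / (p - 1)"
    using sobolev_exponents(4)[OF p_gt_1 p_lt_dim] unfolding \<gamma>_def .
  define a b where "a = real DIM('a) - 1" and "b = p - 1"
  have "a \<noteq> 0" "b \<noteq> 0" using p_gt_1 p_lt_dim unfolding a_def b_def by auto
  then show ?thesis unfolding \<gamma> a_def[symmetric] b_def[symmetric] by (simp add: field_simps)
qed

lemma critical_exponent_pos: "0 < real DIM('a) * (p - 1) / (real DIM('a) - 1)"
  using p_gt_1 p_lt_dim by simp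

lemma below_critical_exponents:
  "real DIM('a) - q * (\<gamma> + 1) = (real DIM('a) * (p - 1) - (real DIM('a) - 1) * q) / (p - 1)"
  "(real DIM('a) - p) / (p * (p - 1)) * q - (real DIM('a) - (real DIM('a) - p) * s / p)
     = ((real DIM('a) - p) * (s + q / (p - 1)) - real DIM('a) * p) / p"
proof -
  define a b where "a = real DIM('a) - 1" and "b = p - 1"
  have nz: "a \<noteq> 0" "b \<noteq> 0" "p \<noteq> 0" using p_gt_1 p_lt_dim unfolding a_def b_def by auto
  have "real DIM('a) - q * (\<gamma> + 1) = (real DIM('a) * b - a * q) / b"
    using critical_exponent[of q] nz unfolding a_def[symmetric] b_def[symmetric]
    by (simp add: field_simps)
  then show "real DIM('a) - q * (\<gamma> + 1) = (real DIM('a) * (p - 1) - (real DIM('a) - 1) * q) / (p - 1)"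
    unfolding a_def b_def .
  show "(real DIM('a) - p) / (p * (p - 1)) * q - (real DIM('a) - (real DIM('a) - p) * s / p)
     = ((real DIM('a) - p) * (s + q / (p - 1)) - real DIM('a) * p) / p"
    unfolding b_def[symmetric] using nz by (simp add: field_simps)
qed

lemma scaled_quotient_exponent:
  "\<gamma> - (real DIM('a) - (real DIM('a) - p) * s / p)
     = ((real DIM('a) - p) * (p - 1) * s - (real DIM('a) * p - 2 * real DIM('a) + p) * p) / (p * (p - 1))"
proof -
  define b where "b = p - 1"
  have nz: "b \<noteq> 0" "p \<noteq> 0" using p_gt_1 unfolding b_def by auto
  have "p = b + 1" unfolding b_def by simp
  then show ?thesis unfolding \<gamma>_def b_def[symmetric] using nz by (simp add: field_simps)
qed

lemma quotient_exponent:
  assumes "real DIM('a) = q * (\<gamma> + 1) + z"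
  shows "z + (real DIM('a) - p) / (p * (p - 1)) * q - (real DIM('a) - (real DIM('a) - p) * s / p)
    = ((real DIM('a) - p) * s - real DIM('a) * q) / p"
proof -
  have "\<gamma> - (real DIM('a) - p) / (p * (p - 1)) = (real DIM('a) - p) / p"
    using sobolev_exponents(3)[OF p_gt_1 p_lt_dim] unfolding \<gamma>_def .
  then have "(real DIM('a) - p) / (p * (p - 1)) * q = q * \<gamma> - q * ((real DIM('a) - p) / p)"
    by (simp add: algebra_simps)
  then have "z + (real DIM('a) - p) / (p * (p - 1)) * q - (real DIM('a) - (real DIM('a) - p) * s / p)
      = (real DIM('a) - p) * s / p - q - q * ((real DIM('a) - p) / p)"
    using assms by (simp add: algebra_simps)
  also have "\<dots> = ((real DIM('a) - p) * s - real DIM('a) * q) / p"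
    using p_gt_1 by (simp add: field_simps)
  finally show ?thesis .
qed

lemma small_ratio_bounds:
  assumes "0 < e" "e \<le> d * min (\<rho> / 4) 1"
  shows "0 < d" "e \<le> d" "e \<le> d * \<rho> / 4"
proof -
  have m: "0 < min (\<rho> / 4) 1" using rho_pos by simp
  then have "0 < d * min (\<rho> / 4) 1" using assms by linarith
  then show d: "0 < d" using m by (simp add: zero_less_mult_iff)
  show "e \<le> d" "e \<le> d * \<rho> / 4"
    using assms(2) mult_left_mono[OF min.cobounded1 less_imp_le[OF d], of "\<rho> / 4" 1]
      mult_left_mono[OF min.cobounded2 less_imp_le[OF d], of "\<rho> / 4" 1] by auto
qed

lemma grad_moment_bounds_above_critical:
  assumes q: "0 < q" and above: "real DIM('a) < q * (\<gamma> + 1)"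
  obtains c C where "0 < c" "0 < C"
    "\<And>e d. 0 < e \<Longrightarrow> e \<le> d * min (\<rho> / 4) 1 \<Longrightarrow>
       c * e powr (real DIM('a) - q * (\<gamma> + 1)) \<le> grad_moment q e d \<and>
       grad_moment q e d \<le> C * e powr (real DIM('a) - q * (\<gamma> + 1))"
proof -
  define \<theta> where "\<theta> = real DIM('a) - q * (\<gamma> + 1)"
  have x0: "0 \<le> 2 powr \<theta>" "2 powr \<theta> < 1" unfolding \<theta>_def using above by (auto intro!: powr_less_one)
  obtain C1 C2 where C: "0 < C1" "0 < C2" and upper: "\<And>e \<delta> K. 0 < e \<Longrightarrow> 0 < \<delta> \<Longrightarrow> \<delta> * \<rho> \<le> e * 2^K \<Longrightarrow>
      grad_moment q e \<delta> \<le> C1 * e powr \<theta> * (1 + (\<Sum>k<K. (2 powr \<theta>)^k)) + C2 * \<delta> powr \<theta>"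
    using grad_moment_upper[OF q, folded \<theta>_def] by metis
  obtain c where c: "0 < c" and lower: "\<And>e \<delta> K. 0 < e \<Longrightarrow> 0 < \<delta> \<Longrightarrow> e * 2^K \<le> \<delta> * \<rho> / 2 \<Longrightarrow>
      c * e powr \<theta> * (\<Sum>k<K. (2 powr \<theta>)^k) \<le> grad_moment q e \<delta>"
    using grad_moment_lower[OF q, folded \<theta>_def] by metis
  define C where "C = C1 * (1 + 1 / (1 - 2 powr \<theta>)) + C2"
  have "0 < C" unfolding C_def using C x0 by (intro add_pos_pos mult_pos_pos) auto
  moreover have "c * e powr \<theta> \<le> grad_moment q e d \<and> grad_moment q e d \<le> C * e powr \<theta>"
    if e: "0 < e" and ed: "e \<le> d * min (\<rho> / 4) 1" for e d
  proof -
    have d: "0 < d" and "e \<le> d" "e * 2^1 \<le> d * \<rho> / 2"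
      using small_ratio_bounds[OF e ed] by auto
    obtain K where "d * \<rho> / e < 2^K" using real_arch_pow[of 2 "d * \<rho> / e"] by auto
    then have "d * \<rho> \<le> e * 2^K" using e by (simp add: field_simps)
    then have "grad_moment q e d \<le> C1 * e powr \<theta> * (1 + (\<Sum>k<K. (2 powr \<theta>)^k)) + C2 * d powr \<theta>"
      by (rule upper[OF e d])
    also have "\<dots> \<le> C1 * e powr \<theta> * (1 + 1 / (1 - 2 powr \<theta>)) + C2 * e powr \<theta>"
    proof (intro add_mono mult_left_mono)
      show "(\<Sum>k<K. (2 powr \<theta>)^k) \<le> 1 / (1 - 2 powr \<theta>)" by (rule geometric_sum_le_of_lt_1[OF x0])
      show "d powr \<theta> \<le> e powr \<theta>" using \<open>e \<le> d\<close> e above unfolding \<theta>_def by (intro powr_mono2') auto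
    qed (use C e in auto)
    finally have "grad_moment q e d \<le> C * e powr \<theta>" unfolding C_def by (simp add: algebra_simps)
    moreover have "c * e powr \<theta> \<le> grad_moment q e d"
      using lower[OF e d \<open>e * 2^1 \<le> d * \<rho> / 2\<close>] by simp
    ultimately show ?thesis by simp
  qed
  ultimately show thesis using that[OF c] unfolding \<theta>_def by blast
qed

lemma grad_moment_bounds_below_critical:
  assumes q: "0 < q" and below: "q * (\<gamma> + 1) < real DIM('a)"
  obtains c C where "0 < c" "0 < C"
    "\<And>e d. 0 < e \<Longrightarrow> e \<le> d * min (\<rho> / 4) 1 \<Longrightarrow>
       c * d powr (real DIM('a) - q * (\<gamma> + 1)) \<le> grad_moment q e d \<and>
       grad_moment q e d \<le> C * d powr (real DIM('a) - q * (\<gamma> + 1))"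
proof -
  define \<theta> where "\<theta> = real DIM('a) - q * (\<gamma> + 1)"
  have \<theta>: "0 < \<theta>" unfolding \<theta>_def using below by simp
  obtain C1 C2 where C: "0 < C1" "0 < C2" and upper: "\<And>e \<delta> K. 0 < e \<Longrightarrow> 0 < \<delta> \<Longrightarrow> \<delta> * \<rho> \<le> e * 2^K \<Longrightarrow>
      grad_moment q e \<delta> \<le> C1 * e powr \<theta> * (1 + (\<Sum>k<K. (2 powr \<theta>)^k)) + C2 * \<delta> powr \<theta>"
    using grad_moment_upper[OF q, folded \<theta>_def] by metis
  obtain c where c: "0 < c" and lower: "\<And>e \<delta> K. 0 < e \<Longrightarrow> 0 < \<delta> \<Longrightarrow> e * 2^K \<le> \<delta> * \<rho> / 2 \<Longrightarrow>
      c * e powr \<theta> * (\<Sum>k<K. (2 powr \<theta>)^k) \<le> grad_moment q e \<delta>"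
    using grad_moment_lower[OF q, folded \<theta>_def] by metis
  define C where "C = C1 * (1 + (2 * \<rho>) powr \<theta> / (2 powr \<theta> - 1)) + C2"
  have "0 < C" unfolding C_def using C \<theta> rho_pos by (intro add_pos_pos mult_pos_pos) auto
  moreover have "0 < c * (\<rho> / 8) powr \<theta>" using c rho_pos by simp
  moreover have "c * (\<rho> / 8) powr \<theta> * d powr \<theta> \<le> grad_moment q e d \<and> grad_moment q e d \<le> C * d powr \<theta>"
    if e: "0 < e" and ed: "e \<le> d * min (\<rho> / 4) 1" for e d
  proof -
    have d: "0 < d" and "e \<le> d" and ed4: "e \<le> d * \<rho> / 4" using small_ratio_bounds[OF e ed] by auto
    have "e \<le> d * \<rho>" "4 * e \<le> d * \<rho>" using ed4 e by auto
    obtain K where K: "d * \<rho> \<le> e * 2^K" "e * 2^K \<le> 2 * (d * \<rho>)"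
      using exists_dyadic_cover[OF e \<open>e \<le> d * \<rho>\<close>] .
    from upper[OF e d K(1)]
    have "grad_moment q e d \<le> C1 * e powr \<theta> + C1 * (e powr \<theta> * (\<Sum>k<K. (2 powr \<theta>)^k)) + C2 * d powr \<theta>"
      by (simp add: algebra_simps)
    also have "\<dots> \<le> C1 * d powr \<theta> + C1 * ((2 * (d * \<rho>)) powr \<theta> / (2 powr \<theta> - 1)) + C2 * d powr \<theta>"
      using dyadic_geometric_sum_le[OF \<theta> e K(2)] \<open>e \<le> d\<close> e \<theta> C
      by (intro add_mono mult_left_mono powr_mono2) auto
    also have "\<dots> = C * d powr \<theta>"
      using d rho_pos unfolding C_def by (simp add: powr_mult algebra_simps)
    finally have up: "grad_moment q e d \<le> C * d powr \<theta>" .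
    obtain L where L: "1 \<le> L" "e * 2^L \<le> d * \<rho> / 2" "d * \<rho> < e * 2^(L+2)"
      using exists_dyadic_fill[OF e \<open>4 * e \<le> d * \<rho>\<close>] .
    note lower[OF e d L(2)]
    moreover have "c * (d * \<rho> / 8) powr \<theta> \<le> c * (e powr \<theta> * (\<Sum>k<L. (2 powr \<theta>)^k))"
      using dyadic_geometric_sum_ge[OF \<theta> e _ L(1,3)] d rho_pos c by (intro mult_left_mono) auto
    moreover have "(d * \<rho> / 8) powr \<theta> = (\<rho> / 8) powr \<theta> * d powr \<theta>"
      by (simp add: powr_mult[symmetric] mult_ac)
    ultimately have "c * (\<rho> / 8) powr \<theta> * d powr \<theta> \<le> grad_moment q e d" by (simp add: mult_ac)
    with up show ?thesis by simp
  qed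
  ultimately show thesis using that unfolding \<theta>_def by blast
qed

lemma grad_moment_bounds_critical:
  assumes q: "0 < q" and critical: "q * (\<gamma> + 1) = real DIM('a)"
  obtains \<alpha> \<beta> \<alpha>' \<beta>' where "0 < \<alpha>" "0 < \<alpha>'"
    "\<And>e d. 0 < e \<Longrightarrow> e \<le> d * min (\<rho> / 4) 1 \<Longrightarrow>
       \<alpha> * ln (d / e) + \<beta> \<le> grad_moment q e d \<and> grad_moment q e d \<le> \<alpha>' * ln (d / e) + \<beta>'"
proof -
  have \<theta>: "real DIM('a) - q * (\<gamma> + 1) = 0" using critical by simp
  obtain C1 C2 where C: "0 < C1" "0 < C2" and upper0: "\<And>e \<delta> K. 0 < e \<Longrightarrow> 0 < \<delta> \<Longrightarrow> \<delta> * \<rho> \<le> e * 2^K \<Longrightarrow>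
      grad_moment q e \<delta> \<le> C1 * e powr 0 * (1 + (\<Sum>k<K. (2 powr 0)^k)) + C2 * \<delta> powr 0"
    using grad_moment_upper[OF q, unfolded \<theta>] by metis
  have upper: "grad_moment q e \<delta> \<le> C1 * (1 + real K) + C2" if "0 < e" "0 < \<delta>" "\<delta> * \<rho> \<le> e * 2^K" for e \<delta> K
    using upper0[OF that] that by simp
  obtain c where c: "0 < c" and lower0: "\<And>e \<delta> K. 0 < e \<Longrightarrow> 0 < \<delta> \<Longrightarrow> e * 2^K \<le> \<delta> * \<rho> / 2 \<Longrightarrow>
      c * e powr 0 * (\<Sum>k<K. (2 powr 0)^k) \<le> grad_moment q e \<delta>"
    using grad_moment_lower[OF q, unfolded \<theta>] by metis
  have lower: "c * real K \<le> grad_moment q e \<delta>" if "0 < e" "0 < \<delta>" "e * 2^K \<le> \<delta> * \<rho> / 2" for e \<delta> K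
    using lower0[OF that] that by simp
  define l2 where "l2 = ln (2::real)"
  have l2: "0 < l2" unfolding l2_def by simp
  have "0 < c / l2" "0 < C1 / l2" using c C l2 by auto
  moreover have "c / l2 * ln (d / e) + c * (ln \<rho> / l2 - 2) \<le> grad_moment q e d \<and>
      grad_moment q e d \<le> C1 / l2 * ln (d / e) + (2 * C1 + C1 * ln \<rho> / l2 + C2)"
    if e: "0 < e" and ed: "e \<le> d * min (\<rho> / 4) 1" for e d
  proof -
    have d: "0 < d" and ed4: "e \<le> d * \<rho> / 4" using small_ratio_bounds[OF e ed] by auto
    have "e \<le> d * \<rho>" "4 * e \<le> d * \<rho>" using ed4 e by auto
    have ln_ratio: "ln (d * \<rho> / e) = ln \<rho> + ln (d / e)"
      using d e rho_pos ln_mult[of \<rho> "d / e"] by (simp add: mult_ac)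
    obtain K where K: "d * \<rho> \<le> e * 2^K" "e * 2^K \<le> 2 * (d * \<rho>)"
      using exists_dyadic_cover[OF e \<open>e \<le> d * \<rho>\<close>] .
    have "C1 * (real K * l2) \<le> C1 * (l2 + ln \<rho> + ln (d / e))"
      using ln_ratio_ge_dyadic[OF e K(2)] ln_ratio C unfolding l2_def by (intro mult_left_mono) auto
    then have "C1 * (1 + real K) + C2 \<le> C1 / l2 * ln (d / e) + (2 * C1 + C1 * ln \<rho> / l2 + C2)"
      using l2 by (simp add: field_simps)
    with upper[OF e d K(1)] have up: "grad_moment q e d \<le> C1 / l2 * ln (d / e) + (2 * C1 + C1 * ln \<rho> / l2 + C2)"
      by linarith
    obtain L where L: "1 \<le> L" "e * 2^L \<le> d * \<rho> / 2" "d * \<rho> < e * 2^(L+2)"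
      using exists_dyadic_fill[OF e \<open>4 * e \<le> d * \<rho>\<close>] .
    have "c * (ln \<rho> + ln (d / e)) \<le> c * (real L * l2 + 2 * l2)"
      using ln_ratio_less_dyadic[OF e _ L(3)] ln_ratio d rho_pos c unfolding l2_def
      by (intro mult_left_mono) auto
    then have "c / l2 * ln (d / e) + c * (ln \<rho> / l2 - 2) \<le> c * real L"
      using l2 by (simp add: field_simps)
    with lower[OF e d L(2)] show ?thesis using up by linarith
  qed
  ultimately show thesis using that by blast
qed

lemma Lnorm_u: "0 < e \<Longrightarrow> Lnorm r (u e \<delta>) = integral\<^sup>L lborel (\<lambda>x. u e \<delta> x powr r) powr (1 / r)"
  unfolding Lnorm_def using u_nonneg by simp

lemma v_fun_eq: "v_fun (real DIM('a)) p \<psi> e \<delta> x = u e \<delta> x / Lnorm (real DIM('a) * p / (real DIM('a) - p)) (u e \<delta>)"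
  unfolding v_fun_def ..

end

section \<open>Sequences of parameters\<close>

locale cutoff_bubble_sequences = cutoff_bubble \<psi> \<rho> p
  for \<psi> :: "'a::euclidean_space \<Rightarrow> real" and \<rho> p +
  fixes \<epsilon> \<delta> :: "nat \<Rightarrow> real"
  assumes eps_pos: "\<And>j. 0 < \<epsilon> j" and delta_pos: "\<And>j. 0 < \<delta> j"
    and ratio_tendsto_0: "(\<lambda>j. \<epsilon> j / \<delta> j) \<longlonglongrightarrow> 0"
begin

abbreviation sobolev_quotient :: "real \<Rightarrow> real \<Rightarrow> nat \<Rightarrow> real" where
  "sobolev_quotient q s j \<equiv>
     integral\<^sup>L lborel (\<lambda>x. norm (grad (v_fun (real DIM('a)) p \<psi> (\<epsilon> j) (\<delta> j)) x) powr q)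
     / integral\<^sup>L lborel (\<lambda>x. v_fun (real DIM('a)) p \<psi> (\<epsilon> j) (\<delta> j) x powr s)"

lemma eventually_small_ratio:
  assumes "0 < \<eta>"
  shows "\<forall>\<^sub>F j in sequentially. \<epsilon> j \<le> \<delta> j * \<eta>"
  using order_tendstoD(2)[OF ratio_tendsto_0 assms]
  by eventually_elim (use delta_pos in \<open>simp add: divide_less_eq mult.commute\<close>)

lemma ln_ratio_tendsto_at_top: "filterlim (\<lambda>j. ln (\<delta> j / \<epsilon> j)) at_top sequentially"
proof -
  have "filterlim (\<lambda>j. inverse (\<epsilon> j / \<delta> j)) at_top sequentially"
    using eps_pos delta_pos by (intro filterlim_inverse_at_top ratio_tendsto_0) simp
  from filterlim_compose[OF ln_at_top this] show ?thesis by simp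
qed

lemma moment_bigtheta:
  assumes "0 < t" "real DIM('a) < \<gamma> * t"
  shows "(\<lambda>j. integral\<^sup>L lborel (\<lambda>x. u (\<epsilon> j) (\<delta> j) x powr t)) \<in> \<Theta>(\<lambda>j. \<epsilon> j powr (real DIM('a) - \<gamma> * t))"
proof -
  define c where "c = 2 powr -((real DIM('a) - p) / p * t) * unit_ball_vol DIM('a)"
  define C where "C = unit_ball_vol DIM('a) * (1 + (2^DIM('a) - 1) / (1 - 2 powr (real DIM('a) - \<gamma> * t)))"
  have "2 powr (real DIM('a) - \<gamma> * t) < 1" using assms by (auto intro!: powr_less_one)
  then have "0 \<le> (2^DIM('a) - 1) / (1 - 2 powr (real DIM('a) - \<gamma> * t))" by (intro divide_nonneg_pos) auto
  then have "0 < c" "0 < C" unfolding c_def C_def by (auto intro!: add_pos_nonneg)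
  have "\<forall>\<^sub>F j in sequentially. \<epsilon> j \<le> \<delta> j * (\<rho> / 2)" by (rule eventually_small_ratio) (use rho_pos in simp)
  then show ?thesis
    by (intro bigthetaI_nonneg_bounds[OF \<open>0 < c\<close> \<open>0 < C\<close>], elim eventually_mono)
       (use moment_le[OF assms] moment_ge[OF assms] eps_pos delta_pos in \<open>auto simp: c_def C_def\<close>)
qed

lemma grad_moment_bigtheta_above_critical:
  assumes "0 < q" "real DIM('a) < q * (\<gamma> + 1)"
  shows "(\<lambda>j. grad_moment q (\<epsilon> j) (\<delta> j)) \<in> \<Theta>(\<lambda>j. \<epsilon> j powr (real DIM('a) - q * (\<gamma> + 1)))"
proof (rule grad_moment_bounds_above_critical[OF assms])
  fix c C
  assume "0 < c" "0 < C" and bounds: "\<And>e d. 0 < e \<Longrightarrow> e \<le> d * min (\<rho> / 4) 1 \<Longrightarrow>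
       c * e powr (real DIM('a) - q * (\<gamma> + 1)) \<le> grad_moment q e d \<and>
       grad_moment q e d \<le> C * e powr (real DIM('a) - q * (\<gamma> + 1))"
  have "\<forall>\<^sub>F j in sequentially. \<epsilon> j \<le> \<delta> j * min (\<rho> / 4) 1" by (rule eventually_small_ratio) (use rho_pos in simp)
  then show ?thesis
    by (intro bigthetaI_nonneg_bounds[OF \<open>0 < c\<close> \<open>0 < C\<close>], elim eventually_mono)
       (use bounds eps_pos in simp)
qed

lemma grad_moment_bigtheta_below_critical:
  assumes "0 < q" "q * (\<gamma> + 1) < real DIM('a)"
  shows "(\<lambda>j. grad_moment q (\<epsilon> j) (\<delta> j)) \<in> \<Theta>(\<lambda>j. \<delta> j powr (real DIM('a) - q * (\<gamma> + 1)))"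
proof (rule grad_moment_bounds_below_critical[OF assms])
  fix c C
  assume "0 < c" "0 < C" and bounds: "\<And>e d. 0 < e \<Longrightarrow> e \<le> d * min (\<rho> / 4) 1 \<Longrightarrow>
       c * d powr (real DIM('a) - q * (\<gamma> + 1)) \<le> grad_moment q e d \<and>
       grad_moment q e d \<le> C * d powr (real DIM('a) - q * (\<gamma> + 1))"
  have "\<forall>\<^sub>F j in sequentially. \<epsilon> j \<le> \<delta> j * min (\<rho> / 4) 1" by (rule eventually_small_ratio) (use rho_pos in simp)
  then show ?thesis
    by (intro bigthetaI_nonneg_bounds[OF \<open>0 < c\<close> \<open>0 < C\<close>], elim eventually_mono)
       (use bounds eps_pos in simp)
qed

lemma grad_moment_bigtheta_critical:
  assumes "0 < q" "q * (\<gamma> + 1) = real DIM('a)"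
  shows "(\<lambda>j. grad_moment q (\<epsilon> j) (\<delta> j)) \<in> \<Theta>(\<lambda>j. ln (\<delta> j / \<epsilon> j))"
proof (rule grad_moment_bounds_critical[OF assms])
  fix \<alpha> \<beta> \<alpha>' \<beta>'
  assume "0 < \<alpha>" "0 < \<alpha>'" and bounds: "\<And>e d. 0 < e \<Longrightarrow> e \<le> d * min (\<rho> / 4) 1 \<Longrightarrow>
       \<alpha> * ln (d / e) + \<beta> \<le> grad_moment q e d \<and> grad_moment q e d \<le> \<alpha>' * ln (d / e) + \<beta>'"
  have "\<forall>\<^sub>F j in sequentially. \<epsilon> j \<le> \<delta> j * min (\<rho> / 4) 1" by (rule eventually_small_ratio) (use rho_pos in simp)
  then show ?thesis
    by (intro bigthetaI_affine_bounds[OF ln_ratio_tendsto_at_top \<open>0 < \<alpha>\<close> \<open>0 < \<alpha>'\<close>, where \<beta> = \<beta> and \<beta>' = \<beta>'], elim eventually_mono)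
       (use bounds eps_pos in simp)
qed

lemma Lnorm_bigtheta:
  "(\<lambda>j. Lnorm (real DIM('a) * p / (real DIM('a) - p)) (u (\<epsilon> j) (\<delta> j)))
     \<in> \<Theta>(\<lambda>j. \<epsilon> j powr -((real DIM('a) - p) / (p * (p - 1))))"
proof -
  define N where "N = real DIM('a)"
  define r where "r = N * p / (N - p)"
  have N: "1 < p" "p < N" unfolding N_def using p_gt_1 p_lt_dim by auto
  note exps = sobolev_exponents[OF N, folded \<gamma>_def[unfolded N_def[symmetric]]]
  have "N * (p - 1) < N * p" using N by simp
  then have r: "0 < r" "N < \<gamma> * r" unfolding r_def exps(1) using N by (auto simp: less_divide_eq)
  have exponent: "(N - \<gamma> * r) * (1 / r) = -((N - p) / (p * (p - 1)))"
    unfolding r_def exps(1) using exps(2) by simp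
  from bigtheta_powr[OF moment_bigtheta[OF r[unfolded N_def]], of "1 / r"]
  have "(\<lambda>j. \<bar>integral\<^sup>L lborel (\<lambda>x. u (\<epsilon> j) (\<delta> j) x powr r)\<bar> powr (1 / r))
      \<in> \<Theta>(\<lambda>j. \<epsilon> j powr ((N - \<gamma> * r) * (1 / r)))"
    using eps_pos unfolding N_def by (simp add: powr_powr)
  moreover have "\<bar>integral\<^sup>L lborel (\<lambda>x. u (\<epsilon> j) (\<delta> j) x powr r)\<bar> = integral\<^sup>L lborel (\<lambda>x. u (\<epsilon> j) (\<delta> j) x powr r)" for j
    by (simp add: integral_nonneg_AE)
  ultimately show ?thesis unfolding exponent using eps_pos by (simp add: Lnorm_u N_def r_def)
qed

lemma v_moment_bigtheta:
  assumes s: "real DIM('a) * (p - 1) / (real DIM('a) - p) < s"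
  shows "(\<lambda>j. integral\<^sup>L lborel (\<lambda>x. v_fun (real DIM('a)) p \<psi> (\<epsilon> j) (\<delta> j) x powr s))
     \<in> \<Theta>(\<lambda>j. \<epsilon> j powr (real DIM('a) - (real DIM('a) - p) * s / p))"
proof -
  define N where "N = real DIM('a)"
  define L where "L j = Lnorm (N * p / (N - p)) (u (\<epsilon> j) (\<delta> j))" for j
  have N: "1 < p" "p < N" unfolding N_def using p_gt_1 p_lt_dim by auto
  have "0 < N * (p - 1) / (N - p)" using N by simp
  then have s_pos: "0 < s" using s unfolding N_def by linarith
  have "N < \<gamma> * s" using s N unfolding \<gamma>_def N_def[symmetric] by (simp add: field_simps)
  have L_nonneg: "0 \<le> L j" for j unfolding L_def Lnorm_def by simp
  have "(\<lambda>j. integral\<^sup>L lborel (\<lambda>x. u (\<epsilon> j) (\<delta> j) x powr s) / \<bar>L j\<bar> powr s)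
      \<in> \<Theta>(\<lambda>j. \<epsilon> j powr (N - \<gamma> * s) / \<bar>\<epsilon> j powr -((N - p) / (p * (p - 1)))\<bar> powr s)"
    using moment_bigtheta[OF s_pos \<open>N < \<gamma> * s\<close>[unfolded N_def]] bigtheta_powr[OF Lnorm_bigtheta]
    unfolding N_def L_def by (intro bigtheta_divide)
  moreover have "integral\<^sup>L lborel (\<lambda>x. v_fun (real DIM('a)) p \<psi> (\<epsilon> j) (\<delta> j) x powr s)
      = integral\<^sup>L lborel (\<lambda>x. u (\<epsilon> j) (\<delta> j) x powr s) / \<bar>L j\<bar> powr s" for j
    using L_nonneg[of j] u_nonneg[OF eps_pos]
    unfolding v_fun_eq L_def N_def by (simp add: powr_divide)
  moreover have "\<epsilon> j powr (N - \<gamma> * s) / \<bar>\<epsilon> j powr -((N - p) / (p * (p - 1)))\<bar> powr s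
      = \<epsilon> j powr (N - (N - p) * s / p)" for j
  proof -
    have "N - \<gamma> * s - (-((N - p) / (p * (p - 1))) * s) = N - (\<gamma> - (N - p) / (p * (p - 1))) * s"
      by (simp add: algebra_simps)
    also have "\<dots> = N - (N - p) * s / p"
      using sobolev_exponents(3)[OF N] unfolding \<gamma>_def N_def[symmetric] by simp
    finally have exponent: "N - \<gamma> * s - (-((N - p) / (p * (p - 1))) * s) = N - (N - p) * s / p" .
    have "\<epsilon> j powr (N - \<gamma> * s) / \<bar>\<epsilon> j powr -((N - p) / (p * (p - 1)))\<bar> powr s
        = \<epsilon> j powr (N - \<gamma> * s - (-((N - p) / (p * (p - 1))) * s))"
      using eps_pos[of j] by (simp only: abs_of_nonneg powr_ge_zero powr_powr powr_diff)
    then show ?thesis unfolding exponent .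
  qed
  ultimately show ?thesis unfolding N_def by simp
qed

lemma v_grad_moment:
  "integral\<^sup>L lborel (\<lambda>x. norm (grad (v_fun (real DIM('a)) p \<psi> (\<epsilon> j) (\<delta> j)) x) powr q)
     = grad_moment q (\<epsilon> j) (\<delta> j) / Lnorm (real DIM('a) * p / (real DIM('a) - p)) (u (\<epsilon> j) (\<delta> j)) powr q"
proof -
  have "0 \<le> Lnorm (real DIM('a) * p / (real DIM('a) - p)) (u (\<epsilon> j) (\<delta> j))" unfolding Lnorm_def by simp
  then show ?thesis
    unfolding v_fun_def[abs_def] grad_scaled_u[OF eps_pos] by (simp add: powr_divide)
qed

lemma grad_ratio_bigtheta:
  assumes s: "real DIM('a) * (p - 1) / (real DIM('a) - p) < s"
    and G: "(\<lambda>j. grad_moment q (\<epsilon> j) (\<delta> j)) \<in> \<Theta>(g)"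
  shows "sobolev_quotient q s \<in> \<Theta>(\<lambda>j. g j * \<epsilon> j powr ((real DIM('a) - p) / (p * (p - 1)) * q)
              / \<epsilon> j powr (real DIM('a) - (real DIM('a) - p) * s / p))"
proof -
  define L where "L j = Lnorm (real DIM('a) * p / (real DIM('a) - p)) (u (\<epsilon> j) (\<delta> j))" for j
  have "(\<lambda>j. grad_moment q (\<epsilon> j) (\<delta> j) / \<bar>L j\<bar> powr q)
      \<in> \<Theta>(\<lambda>j. g j / \<bar>\<epsilon> j powr -((real DIM('a) - p) / (p * (p - 1)))\<bar> powr q)"
    using G bigtheta_powr[OF Lnorm_bigtheta] unfolding L_def by (intro bigtheta_divide)
  moreover have "\<bar>L j\<bar> = L j" for j unfolding L_def Lnorm_def by simp
  moreover have "g j / \<bar>\<epsilon> j powr -((real DIM('a) - p) / (p * (p - 1)))\<bar> powr q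
      = g j * \<epsilon> j powr ((real DIM('a) - p) / (p * (p - 1)) * q)" for j
  proof -
    have "\<bar>\<epsilon> j powr -((real DIM('a) - p) / (p * (p - 1)))\<bar> powr q
        = inverse (\<epsilon> j powr ((real DIM('a) - p) / (p * (p - 1)) * q))"
      using eps_pos[of j] by (simp add: powr_powr powr_minus[symmetric])
    then show ?thesis by (simp add: divide_inverse)
  qed
  ultimately have "(\<lambda>j. integral\<^sup>L lborel (\<lambda>x. norm (grad (v_fun (real DIM('a)) p \<psi> (\<epsilon> j) (\<delta> j)) x) powr q))
      \<in> \<Theta>(\<lambda>j. g j * \<epsilon> j powr ((real DIM('a) - p) / (p * (p - 1)) * q))"
    unfolding v_grad_moment L_def by simp
  from bigtheta_divide[OF this v_moment_bigtheta[OF s]] show ?thesis .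
qed

lemma sobolev_quotient_bigtheta_above_critical:
  assumes q: "real DIM('a) * (p - 1) / (real DIM('a) - 1) < q"
    and s: "real DIM('a) * (p - 1) / (real DIM('a) - p) < s"
  shows "sobolev_quotient q s \<in> \<Theta>(\<lambda>j. \<epsilon> j powr (((real DIM('a) - p) * s - real DIM('a) * q) / p))"
proof -
  have "0 < q" using q critical_exponent_pos by linarith
  moreover have "real DIM('a) < q * (\<gamma> + 1)"
    using critical_exponent[of q] q p_gt_1 p_lt_dim by (smt (verit) divide_pos_pos mult_pos_pos)
  ultimately have "sobolev_quotient q s \<in> \<Theta>(\<lambda>j. \<epsilon> j powr (real DIM('a) - q * (\<gamma> + 1))
      * \<epsilon> j powr ((real DIM('a) - p) / (p * (p - 1)) * q) / \<epsilon> j powr (real DIM('a) - (real DIM('a) - p) * s / p))"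
    by (intro grad_ratio_bigtheta s grad_moment_bigtheta_above_critical)
  also have "(\<lambda>j. \<epsilon> j powr (real DIM('a) - q * (\<gamma> + 1))
      * \<epsilon> j powr ((real DIM('a) - p) / (p * (p - 1)) * q) / \<epsilon> j powr (real DIM('a) - (real DIM('a) - p) * s / p))
    = (\<lambda>j. \<epsilon> j powr (((real DIM('a) - p) * s - real DIM('a) * q) / p))"
    using eps_pos quotient_exponent[of q "real DIM('a) - q * (\<gamma> + 1)" s]
    by (simp add: powr_add[symmetric] powr_diff[symmetric])
  finally show ?thesis .
qed

lemma sobolev_quotient_bigtheta_critical:
  assumes q: "q = real DIM('a) * (p - 1) / (real DIM('a) - 1)"
    and s: "real DIM('a) * (p - 1) / (real DIM('a) - p) < s"
  shows "sobolev_quotient q s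
    \<in> \<Theta>(\<lambda>j. \<epsilon> j powr (((real DIM('a) - p) * s - real DIM('a) * q) / p) * \<bar>ln (\<epsilon> j / \<delta> j)\<bar>)"
proof -
  have "0 < q" using q critical_exponent_pos by simp
  moreover have "q * (\<gamma> + 1) = real DIM('a)" using critical_exponent[of q] q by simp
  ultimately have "sobolev_quotient q s \<in> \<Theta>(\<lambda>j. ln (\<delta> j / \<epsilon> j)
      * \<epsilon> j powr ((real DIM('a) - p) / (p * (p - 1)) * q) / \<epsilon> j powr (real DIM('a) - (real DIM('a) - p) * s / p))"
    by (intro grad_ratio_bigtheta s grad_moment_bigtheta_critical)
  also have "(\<lambda>j. ln (\<delta> j / \<epsilon> j)
      * \<epsilon> j powr ((real DIM('a) - p) / (p * (p - 1)) * q) / \<epsilon> j powr (real DIM('a) - (real DIM('a) - p) * s / p))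
    \<in> \<Theta>(\<lambda>j. \<epsilon> j powr (((real DIM('a) - p) * s - real DIM('a) * q) / p) * \<bar>ln (\<epsilon> j / \<delta> j)\<bar>)"
  proof (rule bigthetaI_cong)
    have "\<forall>\<^sub>F j in sequentially. \<epsilon> j \<le> \<delta> j * (1 / 2)" by (rule eventually_small_ratio) simp
    then show "\<forall>\<^sub>F j in sequentially. ln (\<delta> j / \<epsilon> j)
        * \<epsilon> j powr ((real DIM('a) - p) / (p * (p - 1)) * q) / \<epsilon> j powr (real DIM('a) - (real DIM('a) - p) * s / p)
      = \<epsilon> j powr (((real DIM('a) - p) * s - real DIM('a) * q) / p) * \<bar>ln (\<epsilon> j / \<delta> j)\<bar>"
    proof eventually_elim
      case (elim j)
      have "\<epsilon> j / \<delta> j < 1" using elim eps_pos[of j] delta_pos[of j] by (simp add: divide_less_eq)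
      then have "\<bar>ln (\<epsilon> j / \<delta> j)\<bar> = ln (\<delta> j / \<epsilon> j)"
        using eps_pos[of j] delta_pos[of j] by (simp add: ln_div)
      moreover have "(real DIM('a) - p) / (p * (p - 1)) * q - (real DIM('a) - (real DIM('a) - p) * s / p)
          = ((real DIM('a) - p) * s - real DIM('a) * q) / p"
        using quotient_exponent[of q 0 s] \<open>q * (\<gamma> + 1) = real DIM('a)\<close> by simp
      ultimately show ?case using mult_powr_divide_powr[OF eps_pos[of j]] by simp
    qed
  qed
  finally show ?thesis .
qed

lemma sobolev_quotient_bigtheta_below_critical:
  assumes q: "0 < q" "q < real DIM('a) * (p - 1) / (real DIM('a) - 1)"
    and s: "real DIM('a) * (p - 1) / (real DIM('a) - p) < s"
  shows "sobolev_quotient q s \<in> \<Theta>(\<lambda>j. \<epsilon> j powr (((real DIM('a) - p) * (s + q / (p - 1)) - real DIM('a) * p) / p)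
      * \<delta> j powr ((real DIM('a) * (p - 1) - (real DIM('a) - 1) * q) / (p - 1)))"
proof -
  have "q * (\<gamma> + 1) < real DIM('a)"
    using critical_exponent[of q] q p_gt_1 p_lt_dim by (smt (verit) divide_pos_pos mult_pos_neg)
  with q have "sobolev_quotient q s \<in> \<Theta>(\<lambda>j. \<delta> j powr (real DIM('a) - q * (\<gamma> + 1))
      * \<epsilon> j powr ((real DIM('a) - p) / (p * (p - 1)) * q) / \<epsilon> j powr (real DIM('a) - (real DIM('a) - p) * s / p))"
    by (intro grad_ratio_bigtheta s grad_moment_bigtheta_below_critical)
  also have "(\<lambda>j. \<delta> j powr (real DIM('a) - q * (\<gamma> + 1))
      * \<epsilon> j powr ((real DIM('a) - p) / (p * (p - 1)) * q) / \<epsilon> j powr (real DIM('a) - (real DIM('a) - p) * s / p))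
    = (\<lambda>j. \<epsilon> j powr (((real DIM('a) - p) * (s + q / (p - 1)) - real DIM('a) * p) / p)
      * \<delta> j powr ((real DIM('a) * (p - 1) - (real DIM('a) - 1) * q) / (p - 1)))"
    unfolding below_critical_exponents(1)[symmetric] below_critical_exponents(2)[symmetric]
    using mult_powr_divide_powr[OF eps_pos] by simp
  finally show ?thesis .
qed

lemma scaled_ratio_bigtheta:
  assumes s: "real DIM('a) * (p - 1) / (real DIM('a) - p) < s"
  shows "(\<lambda>j. (\<epsilon> j / \<delta> j) powr ((real DIM('a) - p) / (p - 1))
      / integral\<^sup>L lborel (\<lambda>x. v_fun (real DIM('a)) p \<psi> (\<epsilon> j) (\<delta> j) x powr s))
    \<in> \<Theta>(\<lambda>j. \<epsilon> j powr (((real DIM('a) - p) * (p - 1) * s - (real DIM('a) * p - 2 * real DIM('a) + p) * p)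
        / (p * (p - 1))) * \<delta> j powr (-(real DIM('a) - p) / (p - 1)))"
proof -
  have "(\<lambda>j. (\<epsilon> j / \<delta> j) powr \<gamma> / integral\<^sup>L lborel (\<lambda>x. v_fun (real DIM('a)) p \<psi> (\<epsilon> j) (\<delta> j) x powr s))
    \<in> \<Theta>(\<lambda>j. (\<epsilon> j / \<delta> j) powr \<gamma> / \<epsilon> j powr (real DIM('a) - (real DIM('a) - p) * s / p))"
    by (intro bigtheta_divide bigtheta_refl v_moment_bigtheta s)
  also have "(\<lambda>j. (\<epsilon> j / \<delta> j) powr \<gamma> / \<epsilon> j powr (real DIM('a) - (real DIM('a) - p) * s / p))
    = (\<lambda>j. \<epsilon> j powr (((real DIM('a) - p) * (p - 1) * s - (real DIM('a) * p - 2 * real DIM('a) + p) * p)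
        / (p * (p - 1))) * \<delta> j powr (-(real DIM('a) - p) / (p - 1)))"
    unfolding scaled_quotient_exponent[symmetric] minus_divide_left[symmetric] \<gamma>_def[symmetric]
    using divide_powr_divide_powr[OF eps_pos delta_pos] by simp
  finally show ?thesis unfolding \<gamma>_def .
qed

end

lemma cutoff_bubble_sequencesI:
  fixes \<psi> :: "'a::euclidean_space \<Rightarrow> real"
  assumes "0 < \<rho>" "smooth_fun \<psi>" "closure {x. \<psi> x \<noteq> 0} \<subseteq> ball 0 \<rho>"
    "\<And>x. 0 \<le> \<psi> x \<and> \<psi> x \<le> 1" "\<And>x. x \<in> ball 0 (\<rho>/2) \<Longrightarrow> \<psi> x = 1"
    "1 < p" "p < real DIM('a)"
    "\<And>j. 0 < \<epsilon> j" "\<And>j. 0 < \<delta> j" "(\<lambda>j. \<epsilon> j / \<delta> j) \<longlonglongrightarrow> 0"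
  shows "cutoff_bubble_sequences \<psi> \<rho> p \<epsilon> \<delta>"
proof unfold_locales
  have smooth: "dpart ds \<psi> differentiable_on UNIV" if "set ds \<subseteq> Basis" for ds
    using assms(2) that unfolding smooth_fun_def by blast
  show "\<psi> differentiable (at x)" for x
    using smooth[of "[]"] by (simp add: differentiable_on_def)
  show "continuous_on UNIV (\<lambda>x. frechet_derivative \<psi> (at x) i)" if "i \<in> Basis" for i
    using smooth[of "[i]"] that by (simp add: differentiable_imp_continuous_on)
qed (use assms in auto)

theorem lemma4p1:
  fixes \<psi> :: "real ^ 'n \<Rightarrow> real" and \<rho> p q s :: real
    and \<epsilon> \<delta> :: "nat \<Rightarrow> real"
  defines "N \<equiv> real CARD('n)"
  assumes N2: "CARD('n) \<ge> 2"
    and rho: "\<rho> > 0"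
    and psi_smooth: "smooth_fun \<psi>"
    and psi_supp: "closure {x. \<psi> x \<noteq> 0} \<subseteq> ball 0 \<rho>"
    and psi_range: "\<And>x. 0 \<le> \<psi> x \<and> \<psi> x \<le> 1"
    and psi_one: "\<And>x. x \<in> ball 0 (\<rho>/2) \<Longrightarrow> \<psi> x = 1"
    and pq: "1 < q" "q < p" "p < N"
    and s: "N*(p-1)/(N-p) < s" "s < N*p/(N-p)"
    and eps_pos: "\<And>j. \<epsilon> j > 0"
    and eps_lim: "\<epsilon> \<longlonglongrightarrow> 0"
    and delta: "\<And>j. 0 < \<delta> j \<and> \<delta> j \<le> 1"
    and ratio_lim: "(\<lambda>j. \<epsilon> j / \<delta> j) \<longlonglongrightarrow> 0"
  shows
    "(let R = (\<lambda>j. integral\<^sup>L lborel (\<lambda>x. norm (grad (v_fun N p \<psi> (\<epsilon> j) (\<delta> j)) x) powr q)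
                   / integral\<^sup>L lborel (\<lambda>x. v_fun N p \<psi> (\<epsilon> j) (\<delta> j) x powr s))
      in (q > N*(p-1)/(N-1) \<longrightarrow>
            Theta_seq R (\<lambda>j. \<epsilon> j powr (((N-p)* s - N*q)/p)))
       \<and> (q = N*(p-1)/(N-1) \<longrightarrow>
            Theta_seq R (\<lambda>j. \<epsilon> j powr (((N-p)* s - N*q)/p) * \<bar>ln (\<epsilon> j / \<delta> j)\<bar>))
       \<and> (q < N*(p-1)/(N-1) \<longrightarrow>
            Theta_seq R (\<lambda>j. \<epsilon> j powr (((N-p)*(s + q/(p-1)) - N*p)/p)
                              * \<delta> j powr ((N*(p-1) - (N-1)*q)/(p-1)))))
     \<and> Theta_seq
         (\<lambda>j. (\<epsilon> j / \<delta> j) powr ((N-p)/(p-1))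
               / integral\<^sup>L lborel (\<lambda>x. v_fun N p \<psi> (\<epsilon> j) (\<delta> j) x powr s))
         (\<lambda>j. \<epsilon> j powr (((N-p)*(p-1)* s - (N*p - 2*N + p)*p)/(p*(p-1)))
               * \<delta> j powr (-(N-p)/(p-1)))"
proof -
  have dim: "real DIM(real ^ 'n) = N" unfolding N_def by simp
  interpret cutoff_bubble_sequences \<psi> \<rho> p \<epsilon> \<delta>
    using rho psi_smooth psi_supp psi_range psi_one pq eps_pos delta ratio_lim
    by (intro cutoff_bubble_sequencesI) (auto simp: N_def)
  note results = sobolev_quotient_bigtheta_above_critical sobolev_quotient_bigtheta_critical
    sobolev_quotient_bigtheta_below_critical scaled_ratio_bigtheta
  show ?thesis
    using results[unfolded dim] s(1) pq(1) unfolding Let_def Theta_seq_iff_bigtheta by simp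
qed

end
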